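(* In the $q$-sphere setting described in the context, let $\alpha,\beta\in\mathbb{C}$ and $\delta\in\mathbb{R}\setminus\{0\}$ satisfy $\delta^2\alpha^*=\beta q^2$. Then $(\nabla_{\mathcal S},\sigma_{\mathcal S})$ is a left bimodule connection on $\mathcal S$, and $D=\triangleright\circ\nabla_{\mathcal{S}}$, given by $D(xf^++yf^-)=\alpha q^{-1}(\partial_+y)f^++\beta q(\partial_-x)f^-$, together with $\mathcal{J}$ and $\gamma$ satisfy: $\mathcal J^2=-1$, $\mathcal J\gamma=-\gamma\mathcal J$, $\gamma^2=1$, $[\gamma,a]=0$, $D\gamma=-\gamma D$, $[a,\mathcal J b\mathcal J^{-1}]=0$, $\mathcal J D=D\mathcal J$, and $[[D,a],\mathcal J b\mathcal J^{-1}]=0$ for all $a,b\in\mathbb C_q[S^2]$ (the algebraic conditions of a real spectral triple of dimension $2$ with $\epsilon=-1,\epsilon'=1,\epsilon''=-1$).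
   Context: $q$ is a real nonzero number. $\mathbb{C}_q[SU_2]$ is the $*$-algebra generated by $a,b,c,d$ with $ba=qab$, $ca=qac$, $db=qbd$, $dc=qcd$, $bc=cb$, $da-ad=(q-q^{-1})bc$, $ad-q^{-1}bc=1$, graded by $|a|=|c|=1$, $|b|=|d|=-1$. It carries Woronowicz's left-covariant 3-dimensional $*$-calculus $\Omega^1$, free as a left module with basis $e^0,e^+,e^-$ of degrees $0,2,-2$, with $e^0x=q^{2|x|}xe^0$, $e^\pm x=q^{|x|}xe^\pm$ for homogeneous $x$, and $(e^\pm)^*=-q^{\mp1}e^\mp$. Let $\pi:\Omega^1\to\Omega^1_{hor}$ be the left-module projection killing $e^0$, and write $\pi{\rm d}x=(\partial_+x)e^++(\partial_-x)e^-$. $\mathbb{C}_q[S^2]$ is the degree-0 subalgebra; its calculus $\Omega^1=\Omega^{1,0}\oplus\Omega^{0,1}$ with $\Omega^{1,0}=\{fe^+:|f|=-2\}$, $\Omega^{0,1}=\{fe^-:|f|=2\}$ and ${\rm d}=\pi{\rm d}$. The spinor bimodule is $\mathcal S=\mathcal S_+\oplus\mathcal S_-$, $\mathcal S_\pm=\{xf^\pm: x\in\mathbb C_q[SU_2],|x|=\mp1\}$, where $f^\pm$ are formal symbols commuting with $\mathbb C_q[S^2]$ (so $\mathcal S_\pm$ is the degree $\mp1$ subspace with left/right multiplication). Writing $k=a\otimes d-q^{-1}c\otimes b$ and $k'=d\otimes a-qb\otimes c$: $\nabla_{\mathcal S}(xf^++yf^-)=\pi{\rm d}x.a\otimes d f^+-q^{-1}\pi{\rm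 d}x.c\otimes bf^++\pi{\rm d}y.d\otimes af^--q\,\pi{\rm d}y.b\otimes cf^-$, and $\sigma_{\mathcal S}((xf^++yf^-)\otimes fe^\pm)=xfe^\pm(a\otimes d-q^{-1}c\otimes b)f^++yfe^\pm(d\otimes a-qb\otimes c)f^-$ for $|f|=\mp2$. The Clifford action: $fe^+\triangleright yf^-=\alpha\,fyf^+$, $fe^-\triangleright xf^+=\beta\,fxf^-$, and $fe^+\triangleright xf^+=fe^-\triangleright yf^-=0$. $\mathcal J(xf^\pm)=\pm\delta^{\pm1}x^*f^\mp$ (antilinear), $\gamma=\pm\mathrm{id}$ on $\mathcal S_\pm$. *)

theory Defs
  imports Complex_Main
begin

section \<open>The free algebra on a,b,c,d and the ideal of relations of C_q[SU_2]\<close>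

datatype gen = GA | GB | GC | GD

type_synonym word = "gen list"

text \<open>Elements of the free algebra are represented by formal linear combinations
 (lists of coefficient/word pairs); two representations are the same element of the
 free algebra iff they have the same coefficient function.\<close>
type_synonym fa = "(complex \<times> word) list"

definition coef :: "fa \<Rightarrow> word \<Rightarrow> complex" where
  "coef p w = sum_list (map (\<lambda>(c,u). if u = w then c else 0) p)"

definition fsc :: "complex \<Rightarrow> fa \<Rightarrow> fa" where
  "fsc k p = map (\<lambda>(c,u). (k * c, u)) p"

definition fadd :: "fa \<Rightarrow> fa \<Rightarrow> fa" where
  "fadd p p' = p @ p'"

definition fneg :: "fa \<Rightarrow> fa" where
  "fneg p = fsc (-1) p"

definition fsub :: "fa \<Rightarrow> fa \<Rightarrow> fa" where
  "fsub p p' = p @ fneg p'"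

definition fmul :: "fa \<Rightarrow> fa \<Rightarrow> fa" where
  "fmul p p' = concat (map (\<lambda>(c,u). map (\<lambda>(c',u'). (c * c', u @ u')) p') p)"

definition fconst :: "complex \<Rightarrow> fa" where
  "fconst k = [(k, [])]"

definition fgen :: "gen \<Rightarrow> fa" where
  "fgen g = [(1, [g])]"

abbreviation "ga \<equiv> fgen GA"
abbreviation "gb \<equiv> fgen GB"
abbreviation "gc \<equiv> fgen GC"
abbreviation "gd \<equiv> fgen GD"

definition qrels :: "real \<Rightarrow> fa list" where
  "qrels q = (let Q = complex_of_real q in
    [ fsub (fmul gb ga) (fsc Q (fmul ga gb)),
      fsub (fmul gc ga) (fsc Q (fmul ga gc)),
      fsub (fmul gd gb) (fsc Q (fmul gb gd)),
      fsub (fmul gd gc) (fsc Q (fmul gc gd)),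
      fsub (fmul gb gc) (fmul gc gb),
      fsub (fsub (fmul gd ga) (fmul ga gd)) (fsc (Q - inverse Q) (fmul gb gc)),
      fsub (fsub (fmul ga gd) (fsc (inverse Q) (fmul gb gc))) (fconst 1) ])"

inductive_set qideal :: "real \<Rightarrow> fa set" for q :: real where
  qideal_nil: "[] \<in> qideal q"
| qideal_gen: "i < length (qrels q) \<Longrightarrow> fmul (fmul [(1,u)] (qrels q ! i)) [(1,v)] \<in> qideal q"
| qideal_add: "p \<in> qideal q \<Longrightarrow> p' \<in> qideal q \<Longrightarrow> p @ p' \<in> qideal q"
| qideal_sc: "p \<in> qideal q \<Longrightarrow> fsc k p \<in> qideal q"

definition fzero :: "real \<Rightarrow> fa \<Rightarrow> bool" where
  "fzero q p \<longleftrightarrow> (\<exists>r \<in> qideal q. coef p = coef r)"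

definition feq :: "real \<Rightarrow> fa \<Rightarrow> fa \<Rightarrow> bool" where
  "feq q p p' \<longleftrightarrow> fzero q (fsub p p')"

section \<open>Grading, star\<close>

fun gdeg :: "gen \<Rightarrow> int" where
  "gdeg GA = 1" | "gdeg GC = 1" | "gdeg GB = -1" | "gdeg GD = -1"

definition wdeg :: "word \<Rightarrow> int" where
  "wdeg w = sum_list (map gdeg w)"

text \<open>p is a homogeneous representative of degree n (every element of the degree n
 part of C_q[SU_2] has such a representative, since the relations are homogeneous).\<close>
definition homog :: "int \<Rightarrow> fa \<Rightarrow> bool" where
  "homog n p \<longleftrightarrow> (\<forall>(c,u) \<in> set p. wdeg u = n)"

fun gstar :: "real \<Rightarrow> gen \<Rightarrow> fa" where
  "gstar q GA = gd"
| "gstar q GB = fsc (- inverse (complex_of_real q)) gc"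
| "gstar q GC = fsc (- complex_of_real q) gb"
| "gstar q GD = ga"

fun wstar :: "real \<Rightarrow> word \<Rightarrow> fa" where
  "wstar q [] = fconst 1"
| "wstar q (g # w) = fmul (wstar q w) (gstar q g)"

definition fstar :: "real \<Rightarrow> fa \<Rightarrow> fa" where
  "fstar q p = concat (map (\<lambda>(c,u). fsc (cnj c) (wstar q u)) p)"

section \<open>The horizontal part of Woronowicz's calculus: pi d x = (d_+ x) e^+ + (d_- x) e^-\<close>

text \<open>da = a e^0 + q b e^+, db = a e^- - q^-2 b e^0, dc = c e^0 + q d e^+, dd = c e^- - q^-2 d e^0.\<close>
fun dplus_gen :: "real \<Rightarrow> gen \<Rightarrow> fa" where
  "dplus_gen q GA = fsc (complex_of_real q) gb"
| "dplus_gen q GC = fsc (complex_of_real q) gd"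
| "dplus_gen q GB = []"
| "dplus_gen q GD = []"

fun dminus_gen :: "real \<Rightarrow> gen \<Rightarrow> fa" where
  "dminus_gen q GB = ga"
| "dminus_gen q GD = gc"
| "dminus_gen q GA = []"
| "dminus_gen q GC = []"

text \<open>Leibniz rule with e^{\<pm>} y = q^{|y|} y e^{\<pm>}: d(g w) = (dg) q^{|w|} w + g dw.\<close>
fun wder :: "(gen \<Rightarrow> fa) \<Rightarrow> real \<Rightarrow> word \<Rightarrow> fa" where
  "wder dg q [] = []"
| "wder dg q (g # w) =
     fadd (fsc (complex_of_real (q powi wdeg w)) (fmul (dg g) [(1, w)])) (fmul [(1,[g])] (wder dg q w))"

definition dplus :: "real \<Rightarrow> fa \<Rightarrow> fa" where
  "dplus q p = concat (map (\<lambda>(c,u). fsc c (wder (dplus_gen q) q u)) p)"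

definition dminus :: "real \<Rightarrow> fa \<Rightarrow> fa" where
  "dminus q p = concat (map (\<lambda>(c,u). fsc c (wder (dminus_gen q) q u)) p)"

section \<open>Bimodules: Omega^1 of the sphere and the spinor bundle\<close>

text \<open>Both are represented by pairs of representatives:
 a 1-form (f1,f2) stands for f1 e^+ + f2 e^- (|f1| = -2, |f2| = 2), and
 a spinor (x,y) stands for x f^+ + y f^- (|x| = -1, |y| = 1).\<close>
type_synonym pr = "fa \<times> fa"

definition wfOm :: "pr \<Rightarrow> bool" where
  "wfOm m \<longleftrightarrow> homog (-2) (fst m) \<and> homog 2 (snd m)"

definition wfS :: "pr \<Rightarrow> bool" where
  "wfS s \<longleftrightarrow> homog (-1) (fst s) \<and> homog 1 (snd s)"

definition padd :: "pr \<Rightarrow> pr \<Rightarrow> pr" where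
  "padd m m' = (fadd (fst m) (fst m'), fadd (snd m) (snd m'))"

definition psc :: "complex \<Rightarrow> pr \<Rightarrow> pr" where
  "psc k m = (fsc k (fst m), fsc k (snd m))"

definition pneg :: "pr \<Rightarrow> pr" where
  "pneg m = psc (-1) m"

definition psub :: "pr \<Rightarrow> pr \<Rightarrow> pr" where
  "psub m m' = padd m (pneg m')"

definition plmul :: "fa \<Rightarrow> pr \<Rightarrow> pr" where
  "plmul b m = (fmul b (fst m), fmul b (snd m))"

definition prmul :: "pr \<Rightarrow> fa \<Rightarrow> pr" where
  "prmul m b = (fmul (fst m) b, fmul (snd m) b)"

definition pzero :: "real \<Rightarrow> pr \<Rightarrow> bool" where
  "pzero q m \<longleftrightarrow> fzero q (fst m) \<and> fzero q (snd m)"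

definition peq :: "real \<Rightarrow> pr \<Rightarrow> pr \<Rightarrow> bool" where
  "peq q m m' \<longleftrightarrow> pzero q (psub m m')"

definition pd :: "real \<Rightarrow> fa \<Rightarrow> pr" where
  "pd q x = (dplus q x, dminus q x)"

text \<open>Right multiplication of a horizontal form by z of degree n: (f e^{\<pm>}) z = q^n f z e^{\<pm>}.\<close>
definition hmul :: "real \<Rightarrow> pr \<Rightarrow> fa \<Rightarrow> int \<Rightarrow> pr" where
  "hmul q m z n = psc (complex_of_real (q powi n)) (prmul m z)"

section \<open>Tensor products over B = C_q[S^2]\<close>

text \<open>Formal linear combinations of pairs m \<otimes> n.\<close>
type_synonym ten = "(complex \<times> pr \<times> pr) list"

definition tcoef :: "ten \<Rightarrow> pr \<times> pr \<Rightarrow> complex" where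
  "tcoef t k = sum_list (map (\<lambda>(c,mn). if mn = k then c else 0) t)"

definition tsc :: "complex \<Rightarrow> ten \<Rightarrow> ten" where
  "tsc k t = map (\<lambda>(c,mn). (k * c, mn)) t"

definition tsub :: "ten \<Rightarrow> ten \<Rightarrow> ten" where
  "tsub t t' = t @ tsc (-1) t'"

definition tlmul :: "fa \<Rightarrow> ten \<Rightarrow> ten" where
  "tlmul b t = map (\<lambda>(c,m,n). (c, plmul b m, n)) t"

definition trmul :: "ten \<Rightarrow> fa \<Rightarrow> ten" where
  "trmul t b = map (\<lambda>(c,m,n). (c, m, prmul n b)) t"

definition twf :: "(pr \<Rightarrow> bool) \<Rightarrow> (pr \<Rightarrow> bool) \<Rightarrow> ten \<Rightarrow> bool" where
  "twf wfM wfN t \<longleftrightarrow> (\<forall>(c,m,n) \<in> set t. wfM m \<and> wfN n)"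

text \<open>The subspace of relations defining the balanced tensor product M \<otimes>_B N
 (bilinearity, B-balancedness, independence of representatives).\<close>
inductive_set tnull :: "real \<Rightarrow> (pr \<Rightarrow> bool) \<Rightarrow> (pr \<Rightarrow> bool) \<Rightarrow> ten set"
  for q :: real and wfM :: "pr \<Rightarrow> bool" and wfN :: "pr \<Rightarrow> bool" where
  tn_nil: "[] \<in> tnull q wfM wfN"
| tn_add: "t \<in> tnull q wfM wfN \<Longrightarrow> t' \<in> tnull q wfM wfN \<Longrightarrow> t @ t' \<in> tnull q wfM wfN"
| tn_sc: "t \<in> tnull q wfM wfN \<Longrightarrow> tsc k t \<in> tnull q wfM wfN"
| tn_addL: "wfM m1 \<Longrightarrow> wfM m2 \<Longrightarrow> wfN n \<Longrightarrow>
     [(1, padd m1 m2, n), (-1, m1, n), (-1, m2, n)] \<in> tnull q wfM wfN"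
| tn_addR: "wfM m \<Longrightarrow> wfN n1 \<Longrightarrow> wfN n2 \<Longrightarrow>
     [(1, m, padd n1 n2), (-1, m, n1), (-1, m, n2)] \<in> tnull q wfM wfN"
| tn_scL: "wfM m \<Longrightarrow> wfN n \<Longrightarrow> [(1, psc k m, n), (-k, m, n)] \<in> tnull q wfM wfN"
| tn_scR: "wfM m \<Longrightarrow> wfN n \<Longrightarrow> [(1, m, psc k n), (-k, m, n)] \<in> tnull q wfM wfN"
| tn_bal: "homog 0 b \<Longrightarrow> wfM m \<Longrightarrow> wfN n \<Longrightarrow>
     [(1, prmul m b, n), (-1, m, plmul b n)] \<in> tnull q wfM wfN"
| tn_repL: "wfM m \<Longrightarrow> wfM m' \<Longrightarrow> peq q m m' \<Longrightarrow> wfN n \<Longrightarrow>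
     [(1, m, n), (-1, m', n)] \<in> tnull q wfM wfN"
| tn_repR: "wfM m \<Longrightarrow> wfN n \<Longrightarrow> wfN n' \<Longrightarrow> peq q n n' \<Longrightarrow>
     [(1, m, n), (-1, m, n')] \<in> tnull q wfM wfN"

definition teq :: "real \<Rightarrow> (pr \<Rightarrow> bool) \<Rightarrow> (pr \<Rightarrow> bool) \<Rightarrow> ten \<Rightarrow> ten \<Rightarrow> bool" where
  "teq q wfM wfN t t' \<longleftrightarrow> (\<exists>r \<in> tnull q wfM wfN. tcoef (tsub t t') = tcoef r)"

section \<open>The connection, generalised braiding, Clifford action, D, J, gamma\<close>

text \<open>nabla_S(x f^+ + y f^-) = pi dx.a \<otimes> d f^+ - q^-1 pi dx.c \<otimes> b f^+
   + pi dy.d \<otimes> a f^- - q pi dy.b \<otimes> c f^-.\<close>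
definition nablaS :: "real \<Rightarrow> pr \<Rightarrow> ten" where
  "nablaS q s = (let Q = complex_of_real q; x = fst s; y = snd s in
     [ (1, hmul q (pd q x) ga 1, (gd, [])),
       (- inverse Q, hmul q (pd q x) gc 1, (gb, [])),
       (1, hmul q (pd q y) gd (-1), ([], ga)),
       (- Q, hmul q (pd q y) gb (-1), ([], gc)) ])"

text \<open>sigma_S((x f^+ + y f^-) \<otimes> \<omega>) = x \<omega> (a \<otimes> d - q^-1 c \<otimes> b) f^+ + y \<omega> (d \<otimes> a - q b \<otimes> c) f^-.\<close>
definition sigmaS1 :: "real \<Rightarrow> pr \<Rightarrow> pr \<Rightarrow> ten" where
  "sigmaS1 q s w = (let Q = complex_of_real q; x = fst s; y = snd s in
     [ (1, hmul q (plmul x w) ga 1, (gd, [])),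
       (- inverse Q, hmul q (plmul x w) gc 1, (gb, [])),
       (1, hmul q (plmul y w) gd (-1), ([], ga)),
       (- Q, hmul q (plmul y w) gb (-1), ([], gc)) ])"

definition sigmaS :: "real \<Rightarrow> ten \<Rightarrow> ten" where
  "sigmaS q t = concat (map (\<lambda>(c,s,w). tsc c (sigmaS1 q s w)) t)"

text \<open>Clifford action: f e^+ \<triangleright> y f^- = \<alpha> f y f^+, f e^- \<triangleright> x f^+ = \<beta> f x f^-, others 0.\<close>
definition cliff1 :: "complex \<Rightarrow> complex \<Rightarrow> pr \<Rightarrow> pr \<Rightarrow> pr" where
  "cliff1 \<alpha> \<beta> w s = (fsc \<alpha> (fmul (fst w) (snd s)), fsc \<beta> (fmul (snd w) (fst s)))"

definition cliff :: "complex \<Rightarrow> complex \<Rightarrow> ten \<Rightarrow> pr" where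
  "cliff \<alpha> \<beta> t = (concat (map (\<lambda>(c,w,s). fsc c (fst (cliff1 \<alpha> \<beta> w s))) t),
                   concat (map (\<lambda>(c,w,s). fsc c (snd (cliff1 \<alpha> \<beta> w s))) t))"

definition DiracS :: "real \<Rightarrow> complex \<Rightarrow> complex \<Rightarrow> pr \<Rightarrow> pr" where
  "DiracS q \<alpha> \<beta> s = (fsc (\<alpha> * inverse (complex_of_real q)) (dplus q (snd s)),
                      fsc (\<beta> * complex_of_real q) (dminus q (fst s)))"

definition JS :: "real \<Rightarrow> real \<Rightarrow> pr \<Rightarrow> pr" where
  "JS q \<delta> s = (fsc (- complex_of_real (inverse \<delta>)) (fstar q (snd s)),
               fsc (complex_of_real \<delta>) (fstar q (fst s)))"

definition JSinv :: "real \<Rightarrow> real \<Rightarrow> pr \<Rightarrow> pr" where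
  "JSinv q \<delta> s = pneg (JS q \<delta> s)"

definition gammaS :: "pr \<Rightarrow> pr" where
  "gammaS s = (fst s, fneg (snd s))"

section \<open>Left bimodule connections\<close>

definition left_bimodule_connection_S :: "real \<Rightarrow> (pr \<Rightarrow> ten) \<Rightarrow> (ten \<Rightarrow> ten) \<Rightarrow> bool" where
  "left_bimodule_connection_S q nab sig \<longleftrightarrow>
     \<comment> \<open>nabla : S \<rightarrow> \<Omega>^1 \<otimes>_B S is a well-defined linear map\<close>
     (\<forall>s. wfS s \<longrightarrow> twf wfOm wfS (nab s)) \<and>
     (\<forall>s s'. wfS s \<longrightarrow> wfS s' \<longrightarrow> peq q s s' \<longrightarrow> teq q wfOm wfS (nab s) (nab s')) \<and>
     (\<forall>s s'. wfS s \<longrightarrow> wfS s' \<longrightarrow> teq q wfOm wfS (nab (padd s s')) (nab s @ nab s')) \<and>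
     (\<forall>k s. wfS s \<longrightarrow> teq q wfOm wfS (nab (psc k s)) (tsc k (nab s))) \<and>
     \<comment> \<open>left Leibniz rule\<close>
     (\<forall>b s. homog 0 b \<longrightarrow> wfS s \<longrightarrow>
        teq q wfOm wfS (nab (plmul b s)) ([(1, pd q b, s)] @ tlmul b (nab s))) \<and>
     \<comment> \<open>sigma : S \<otimes>_B \<Omega>^1 \<rightarrow> \<Omega>^1 \<otimes>_B S is a well-defined bimodule map\<close>
     (\<forall>t. twf wfS wfOm t \<longrightarrow> twf wfOm wfS (sig t)) \<and>
     (\<forall>t t'. twf wfS wfOm t \<longrightarrow> twf wfS wfOm t' \<longrightarrow> teq q wfS wfOm t t' \<longrightarrow>
        teq q wfOm wfS (sig t) (sig t')) \<and>
     (\<forall>t t'. twf wfS wfOm t \<longrightarrow> twf wfS wfOm t' \<longrightarrow>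
        teq q wfOm wfS (sig (t @ t')) (sig t @ sig t')) \<and>
     (\<forall>k t. twf wfS wfOm t \<longrightarrow> teq q wfOm wfS (sig (tsc k t)) (tsc k (sig t))) \<and>
     (\<forall>b t. homog 0 b \<longrightarrow> twf wfS wfOm t \<longrightarrow>
        teq q wfOm wfS (sig (tlmul b t)) (tlmul b (sig t))) \<and>
     (\<forall>b t. homog 0 b \<longrightarrow> twf wfS wfOm t \<longrightarrow>
        teq q wfOm wfS (sig (trmul t b)) (trmul (sig t) b)) \<and>
     \<comment> \<open>right (twisted) Leibniz rule\<close>
     (\<forall>b s. homog 0 b \<longrightarrow> wfS s \<longrightarrow>
        teq q wfOm wfS (nab (prmul s b)) (trmul (nab s) b @ sig [(1, s, pd q b)]))"

end

theory Submission
  imports Defs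
begin

text \<open>The twisted
derivations \<open>\<partial>\<^sub>\<pm>\<close> descend to \<open>\<C>\<^sub>q[SU\<^sub>2]\<close> because they map every relation into that ideal.
The balanced tensor product \<open>\<Omega>\<^sup>1 \<otimes>\<^sub>B \<S>\<close> is controlled by the quantum determinant: since
\<open>ad - q\<^sup>-\<^sup>1cb = 1 = da - qbc\<close>, every tensor \<open>\<omega> \<otimes> (xf\<^sup>+ + yf\<^sup>-)\<close> equals
\<open>\<omega>xa \<otimes> df\<^sup>+ - q\<^sup>-\<^sup>1\<omega>xc \<otimes> bf\<^sup>+ + \<omega>yd \<otimes> af\<^sup>- - q\<omega>yb \<otimes> cf\<^sup>-\<close>, so a tensor is determined by
the two horizontal forms \<open>\<Sum>\<omega>x\<close> and \<open>\<Sum>\<omega>y\<close> modulo the relations, and each axiom of a left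
bimodule connection becomes an identity in \<open>\<C>\<^sub>q[SU\<^sub>2]\<close>. The conditions on \<open>\<J>\<close>, \<open>\<gamma>\<close> and \<open>D\<close>
are componentwise identities; \<open>\<J>D = D\<J>\<close> rests on \<open>(\<partial>\<^sub>-x)\<^sup>* = -q\<^sup>|\<^sup>x\<^sup>|\<^sup>+\<^sup>1 \<partial>\<^sub>+(x\<^sup>*)\<close>, whose
coefficients match those of \<open>D\<close> exactly when \<open>\<delta>\<^sup>2\<alpha>\<^sup>* = \<beta>q\<^sup>2\<close>.\<close>

section \<open>Formal linear combinations\<close>

definition lcoef :: "(complex \<times> 'a) list \<Rightarrow> 'a \<Rightarrow> complex" where
  "lcoef p w = sum_list (map (\<lambda>(c,u). if u = w then c else 0) p)"

lemma coef_eq_lcoef: "coef = lcoef"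
  by (rule ext)+ (simp add: coef_def lcoef_def)

lemma tcoef_eq_lcoef: "tcoef = lcoef"
  by (rule ext)+ (simp add: tcoef_def lcoef_def)

lemma lcoef_Cons: "lcoef ((c,u)#p) w = (if u = w then c else 0) + lcoef p w"
  by (simp add: lcoef_def)

lemma sum_list_lcoef_repr:
  fixes F :: "complex \<Rightarrow> 'v \<Rightarrow> 'w::comm_monoid_add"
  assumes F0: "\<And>v. F 0 v = 0" and Fadd: "\<And>a b v. F (a+b) v = F a v + F b v"
    and X: "finite X" "set (map snd p) \<subseteq> X"
  shows "sum_list (map (\<lambda>(c,u). F c (h u)) p) = (\<Sum>x\<in>X. F (lcoef p x) (h x))"
using X(2) proof (induction p)
  case Nil then show ?case by (simp add: F0 lcoef_def)
next
  case (Cons a p) obtain c u where a: "a = (c,u)" by force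
  have uX: "u \<in> X" using Cons a by auto
  have "(\<Sum>x\<in>X. F (lcoef ((c,u)#p) x) (h x))
      = (\<Sum>x\<in>X. F (if u = x then c else 0) (h x)) + (\<Sum>x\<in>X. F (lcoef p x) (h x))"
    by (simp add: lcoef_Cons Fadd sum.distrib)
  also have "(\<Sum>x\<in>X. F (if u = x then c else 0) (h x)) = (\<Sum>x\<in>X. if u = x then F c (h x) else 0)"
    by (rule sum.cong) (auto simp: F0)
  also have "\<dots> = F c (h u)" using uX X(1) by simp
  finally show ?case using Cons a by simp
qed

lemma sum_list_cong_lcoef:
  fixes F :: "complex \<Rightarrow> 'v \<Rightarrow> 'w::comm_monoid_add"
  assumes "\<And>v. F 0 v = 0" and "\<And>a b v. F (a+b) v = F a v + F b v" and "lcoef p = lcoef p'"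
  shows "sum_list (map (\<lambda>(c,u). F c (h u)) p) = sum_list (map (\<lambda>(c,u). F c (h u)) p')"
proof -
  let ?X = "set (map snd p) \<union> set (map snd p')"
  have "sum_list (map (\<lambda>(c,u). F c (h u)) p) = (\<Sum>x\<in>?X. F (lcoef p x) (h x))"
    by (rule sum_list_lcoef_repr[where F=F, OF assms(1,2)]) auto
  also have "\<dots> = (\<Sum>x\<in>?X. F (lcoef p' x) (h x))" using assms(3) by simp
  also have "\<dots> = sum_list (map (\<lambda>(c,u). F c (h u)) p')"
    by (rule sum_list_lcoef_repr[where F=F, OF assms(1,2), symmetric]) auto
  finally show ?thesis .
qed

section \<open>The free algebra\<close>

lemma coef_Nil[simp]: "coef [] w = 0"
  by (simp add: coef_def)
lemma coef_Cons: "coef ((c,u)#p) w = (if u = w then c else 0) + coef p w"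
  by (simp add: coef_def)
lemma coef_append[simp]: "coef (p@p') w = coef p w + coef p' w"
  by (simp add: coef_def)
lemma fsc_Nil[simp]: "fsc k [] = []"
  by (simp add: fsc_def)
lemma fsc_Cons[simp]: "fsc k ((c,u)#p) = (k*c,u) # fsc k p"
  by (simp add: fsc_def)
lemma fsc_append[simp]: "fsc k (p@p') = fsc k p @ fsc k p'"
  by (simp add: fsc_def)
lemma fsc_fsc[simp]: "fsc k (fsc l p) = fsc (k*l) p"
  by (induction p) auto
lemma coef_fsc[simp]: "coef (fsc k p) w = k * coef p w"
  by (induction p) (auto simp: coef_Cons algebra_simps)

lemma fmul_Nil1[simp]: "fmul [] p = []"
  by (simp add: fmul_def)
lemma fmul_Nil2[simp]: "fmul p [] = []"
  by (induction p) (auto simp: fmul_def)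
lemma fmul_Cons1: "fmul ((c,u)#p) x = map (\<lambda>(c',u'). (c*c', u@u')) x @ fmul p x"
  by (simp add: fmul_def)
lemma fmul_append1[simp]: "fmul (p@p') x = fmul p x @ fmul p' x"
  by (simp add: fmul_def)
lemma fmul_one1[simp]: "fmul [(1,[])] x = x"
  by (induction x) (auto simp: fmul_def)
lemma fmul_fsc1: "fmul (fsc k p) x = fsc k (fmul p x)"
  by (induction p) (auto simp: fmul_def fsc_def comp_def split_def mult.assoc)
lemma fmul_const1: "fmul [(k,[])] x = fsc k x"
  by (induction x) (auto simp: fmul_def fsc_def)
lemma fmul_const2: "fmul x [(k,[])] = fsc k x"
  by (induction x) (auto simp: fmul_def fsc_def mult.commute)

lemma coef_concat_fsc:
  "coef (concat (map (\<lambda>(c,u). fsc (f c) (h u)) p)) w = sum_list (map (\<lambda>(c,u). f c * coef (h u) w) p)"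
  by (induction p) auto

lemma coef_fmul_monom:
  "coef (fmul [(1,u)] x) w = (if take (length u) w = u then coef x (drop (length u) w) else 0)"
proof (induction x)
  case Nil then show ?case by simp
next
  case (Cons a x) obtain c v where a: "a = (c,v)" by force
  have "fmul [(1,u)] (a#x) = (c, u@v) # fmul [(1,u)] x" using a by (simp add: fmul_def)
  then show ?case using Cons a by (auto simp: coef_Cons append_eq_conv_conj)
qed

lemma coef_fmul: "coef (fmul p x) w =
   sum_list (map (\<lambda>(c,u). c * (if take (length u) w = u then coef x (drop (length u) w) else 0)) p)"
proof -
  have "fmul p x = concat (map (\<lambda>(c,u). fsc c (fmul [(1,u)] x)) p)"
    by (induction p) (auto simp: fmul_def fsc_def)
  then show ?thesis by (simp add: coef_concat_fsc coef_fmul_monom)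
qed

lemma coef_fmul_cong1: "coef p = coef p' \<Longrightarrow> coef (fmul p x) = coef (fmul p' x)"
  unfolding coef_fmul fun_eq_iff
  by (intro allI sum_list_cong_lcoef[where F="(*)"]) (auto simp: coef_eq_lcoef algebra_simps)

lemma coef_fmul_cong2: "coef x = coef x' \<Longrightarrow> coef (fmul p x) = coef (fmul p x')"
  by (rule ext, induction p) (auto simp: coef_fmul)

lemma fmul_assoc: "fmul (fmul p x) y = fmul p (fmul x y)"
proof (induction p)
  case Nil then show ?case by (simp add: fmul_def)
next
  case (Cons a p) obtain c u where a: "a = (c,u)" by force
  have "fmul (map (\<lambda>(c',u'). (c*c', u@u')) x) y = map (\<lambda>(c',u'). (c*c', u@u')) (fmul x y)"
    by (induction x) (auto simp: fmul_def comp_def split_def mult.assoc)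
  then show ?case using Cons a by (simp add: fmul_Cons1)
qed

lemma coef_fmul_append: "coef (fmul p (x@y)) w = coef (fmul p x) w + coef (fmul p y) w"
  by (induction p) (auto simp: coef_fmul algebra_simps)

definition coef_eq :: "fa \<Rightarrow> fa \<Rightarrow> bool" where
  "coef_eq p p' \<longleftrightarrow> coef p = coef p'"

lemma coef_eq_refl[simp]: "coef_eq p p"
  by (simp add: coef_eq_def)

quotient_type fralg = fa / coef_eq
  morphisms rep_fralg abs_fralg
  by (auto intro!: equivpI reflpI sympI transpI simp: coef_eq_def)

instantiation fralg :: ring_1
begin
lift_definition zero_fralg :: fralg is "[]" .
lift_definition one_fralg :: fralg is "[(1,[])]" .
lift_definition plus_fralg :: "fralg \<Rightarrow> fralg \<Rightarrow> fralg" is "\<lambda>p p'. p @ p'"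
  by (simp add: coef_eq_def fun_eq_iff)
lift_definition uminus_fralg :: "fralg \<Rightarrow> fralg" is "fsc (-1)"
  by (simp add: coef_eq_def fun_eq_iff)
lift_definition minus_fralg :: "fralg \<Rightarrow> fralg \<Rightarrow> fralg" is "\<lambda>p p'. p @ fsc (-1) p'"
  by (simp add: coef_eq_def fun_eq_iff)
lift_definition times_fralg :: "fralg \<Rightarrow> fralg \<Rightarrow> fralg" is fmul
  unfolding coef_eq_def by (metis coef_fmul_cong1 coef_fmul_cong2)
instance
proof
  fix a b c :: fralg
  show "a * b * c = a * (b * c)" by transfer (simp add: coef_eq_def fmul_assoc)
  show "1 * a = a" by transfer (simp add: coef_eq_def)
  show "a * 1 = a" by transfer (simp add: coef_eq_def fmul_const2 fun_eq_iff)
  show "(a + b) * c = a * c + b * c" by transfer (simp add: coef_eq_def)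
  show "a * (b + c) = a * b + a * c"
    by transfer (simp add: coef_eq_def fun_eq_iff coef_fmul_append)
  show "a + b + c = a + (b + c)" by transfer (simp add: coef_eq_def)
  show "a + b = b + a" by transfer (simp add: coef_eq_def fun_eq_iff)
  show "0 + a = a" by transfer (simp add: coef_eq_def)
  show "- a + a = 0" by transfer (simp add: coef_eq_def fun_eq_iff)
  show "a - b = a + - b" by transfer (simp add: coef_eq_def)
  show "(0::fralg) \<noteq> 1" by transfer (simp add: coef_eq_def fun_eq_iff coef_Cons)
qed
end

lift_definition cconst :: "complex \<Rightarrow> fralg" is "\<lambda>k. [(k,[])]" .
lift_definition monom :: "word \<Rightarrow> fralg" is "\<lambda>u. [(1,u)]" .

definition cscale :: "complex \<Rightarrow> fralg \<Rightarrow> fralg" where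
  "cscale k x = cconst k * x"

lemma fralg_abs_ex: "\<exists>p. x = abs_fralg p"
  by (metis Quotient_abs_rep Quotient_fralg)

lemma abs_fralg_eq_iff: "abs_fralg p = abs_fralg p' \<longleftrightarrow> coef p = coef p'"
  by (simp add: coef_eq_def fralg.abs_eq_iff)

lemma abs_fralg_Nil[simp]: "abs_fralg [] = 0"
  by (simp add: zero_fralg_def)
lemma abs_fralg_one[simp]: "abs_fralg [(1,[])] = 1"
  by (metis one_fralg.abs_eq)
lemma abs_fralg_append[simp]: "abs_fralg (p@p') = abs_fralg p + abs_fralg p'"
  by (metis plus_fralg.abs_eq)
lemma abs_fralg_fmul[simp]: "abs_fralg (fmul p p') = abs_fralg p * abs_fralg p'"
  by (metis times_fralg.abs_eq)
lemma abs_fralg_fsc[simp]: "abs_fralg (fsc k p) = cscale k (abs_fralg p)"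
  by (metis cconst.abs_eq cscale_def times_fralg.abs_eq fmul_const1)
lemma abs_fralg_single: "abs_fralg [(c,u)] = cscale c (monom u)"
  by (metis abs_fralg_fsc fsc_Cons fsc_Nil monom.abs_eq mult.right_neutral)
lemma abs_fralg_Cons: "abs_fralg ((c,u)#p) = cscale c (monom u) + abs_fralg p"
  by (metis abs_fralg_append abs_fralg_single append_Cons append_Nil)

lemma fralg_induct[case_names zero monom_add]:
  assumes "P 0" and "\<And>c u x. P x \<Longrightarrow> P (cscale c (monom u) + x)"
  shows "P x"
proof -
  obtain p where "x = abs_fralg p" using fralg_abs_ex by blast
  moreover have "P (abs_fralg p)"
    by (induction p) (auto simp: abs_fralg_Cons assms)
  ultimately show ?thesis by simp
qed

lemma cconst_add: "cconst (a+b) = cconst a + cconst b"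
  by transfer (simp add: coef_eq_def fun_eq_iff coef_Cons)
lemma cconst_mult: "cconst (a*b) = cconst a * cconst b"
  by transfer (simp add: coef_eq_def fun_eq_iff coef_Cons fmul_def)
lemma cconst_0[simp]: "cconst 0 = 0"
  by transfer (simp add: coef_eq_def fun_eq_iff coef_Cons)
lemma cconst_1[simp]: "cconst 1 = 1"
  by transfer simp
lemma cconst_uminus: "cconst (-a) = - cconst a"
  by (metis add_eq_0_iff2 cconst_0 cconst_add)
lemma cconst_commute: "cconst k * x = x * cconst k"
  by transfer (simp add: fmul_const1 fmul_const2)

lemma monom_append: "monom (u@v) = monom u * monom v"
  by transfer (simp add: fmul_def)
lemma monom_Nil[simp]: "monom [] = 1"
  by transfer simp
lemma monom_Cons: "monom (g#w) = monom [g] * monom w"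
  by (metis append_Cons append_Nil monom_append)

lemma abs_fralg_fneg[simp]: "abs_fralg (fneg p) = - abs_fralg p"
  by (simp add: fneg_def cscale_def cconst_uminus)
lemma abs_fralg_fsub[simp]: "abs_fralg (fsub p p') = abs_fralg p - abs_fralg p'"
  by (simp add: fsub_def cscale_def cconst_uminus)
lemma abs_fralg_fadd[simp]: "abs_fralg (fadd p p') = abs_fralg p + abs_fralg p'"
  by (simp add: fadd_def)
lemma abs_fralg_fconst[simp]: "abs_fralg (fconst k) = cconst k"
  by (simp add: fconst_def cconst.abs_eq)
lemma abs_fralg_fgen[simp]: "abs_fralg (fgen g) = monom [g]"
  by (simp add: fgen_def monom.abs_eq)

lemma cscale_mult_left[simp]: "cscale k x * y = cscale k (x*y)"
  by (simp add: cscale_def mult.assoc)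
lemma cscale_mult_right[simp]: "x * cscale k y = cscale k (x*y)"
  by (metis cscale_def cconst_commute mult.assoc)
lemma cscale_cscale[simp]: "cscale k (cscale l x) = cscale (k*l) x"
  by (simp add: cscale_def cconst_mult mult.assoc)
lemma cscale_add[simp]: "cscale k (x+y) = cscale k x + cscale k y"
  by (simp add: cscale_def algebra_simps)
lemma cscale_diff[simp]: "cscale k (x-y) = cscale k x - cscale k y"
  by (simp add: cscale_def algebra_simps)
lemma cscale_uminus[simp]: "cscale k (-x) = - cscale k x"
  by (simp add: cscale_def algebra_simps)
lemma cscale_1[simp]: "cscale 1 x = x"
  by (simp add: cscale_def)
lemma cscale_0[simp]: "cscale 0 x = 0"
  by (simp add: cscale_def)
lemma cscale_zero[simp]: "cscale k 0 = 0"
  by (simp add: cscale_def)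
lemma cscale_add_scalar: "cscale (k+l) x = cscale k x + cscale l x"
  by (simp add: cscale_def cconst_add algebra_simps)
lemma cscale_minus_scalar: "cscale (-k) x = - cscale k x"
  by (simp add: cscale_def cconst_uminus)

lemma wdeg_Nil[simp]: "wdeg [] = 0"
  by (simp add: wdeg_def)
lemma wdeg_Cons[simp]: "wdeg (g#w) = gdeg g + wdeg w"
  by (simp add: wdeg_def)


lemma homog_Nil[simp]: "homog n []"
  by (simp add: homog_def)
lemma homog_Cons[simp]: "homog n ((c,u)#p) \<longleftrightarrow> wdeg u = n \<and> homog n p"
  by (simp add: homog_def)
lemma homog_append[simp]: "homog n (p@p') \<longleftrightarrow> homog n p \<and> homog n p'"
  by (auto simp: homog_def)

lemma homog_fsc[simp]: "homog n (fsc k p) \<longleftrightarrow> homog n p"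
  by (induction p) auto

lemma homog_fmul: "homog m p \<Longrightarrow> homog n p' \<Longrightarrow> homog (m+n) (fmul p p')"
proof (induction p)
  case Nil then show ?case by (simp add: homog_def fmul_def)
next
  case (Cons a p) obtain c u where a: "a = (c,u)" by force
  have "homog (wdeg u + n) (map (\<lambda>(c',u'). (c*c', u@u')) p')"
    using Cons.prems(2) by (induction p') (auto simp: wdeg_def)
  then show ?case using Cons a by (simp add: fmul_Cons1)
qed

definition homogeneous :: "int \<Rightarrow> fralg \<Rightarrow> bool" where
  "homogeneous n x \<longleftrightarrow> (\<exists>p. homog n p \<and> x = abs_fralg p)"

lemma homogeneous_abs: "homog n p \<Longrightarrow> homogeneous n (abs_fralg p)"
  unfolding homogeneous_def by blast

lemma homogeneous_induct[consumes 1, case_names zero monom_add]: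
  assumes "homogeneous n x" and "P 0"
    and "\<And>c u x. wdeg u = n \<Longrightarrow> P x \<Longrightarrow> P (cscale c (monom u) + x)"
  shows "P x"
proof -
  obtain p where p: "homog n p" "x = abs_fralg p" using assms(1) homogeneous_def by auto
  have "P (abs_fralg p)" using p(1)
    by (induction p) (auto simp: abs_fralg_Cons homog_def assms(2,3))
  then show ?thesis using p(2) by simp
qed

lemma homogeneous_monom: "homogeneous (wdeg u) (monom u)"
  using homogeneous_abs[of "wdeg u" "[(1,u)]"] by (simp add: homog_def monom.abs_eq)

lemma homogeneous_mult:
  assumes "homogeneous m x" "homogeneous n y" shows "homogeneous (m+n) (x*y)"
proof -
  obtain p p' where "homog m p" "x = abs_fralg p" "homog n p'" "y = abs_fralg p'"
    using assms homogeneous_def by auto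
  then show ?thesis using homogeneous_abs[OF homog_fmul] by simp
qed

section \<open>The twisted derivations \<open>\<partial>\<^sub>\<pm>\<close>\<close>

definition dlin :: "(gen \<Rightarrow> fa) \<Rightarrow> real \<Rightarrow> fa \<Rightarrow> fa" where
  "dlin dg q p = concat (map (\<lambda>(c,u). fsc c (wder dg q u)) p)"

lift_definition Der :: "(gen \<Rightarrow> fa) \<Rightarrow> real \<Rightarrow> fralg \<Rightarrow> fralg" is dlin
proof -
  fix dg q p p' assume "coef_eq p p'"
  then have "lcoef p = lcoef p'" by (simp add: coef_eq_def coef_eq_lcoef)
  then have "\<And>w. sum_list (map (\<lambda>(c,u). c * coef (wder dg q u) w) p)
      = sum_list (map (\<lambda>(c,u). c * coef (wder dg q u) w) p')"
    by (intro sum_list_cong_lcoef[where F="(*)"]) (auto simp: algebra_simps)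
  then show "coef_eq (dlin dg q p) (dlin dg q p')"
    by (simp add: coef_eq_def dlin_def coef_concat_fsc fun_eq_iff)
qed

abbreviation "Dplus q \<equiv> Der (dplus_gen q) q"
abbreviation "Dminus q \<equiv> Der (dminus_gen q) q"

lemma abs_fralg_dplus[simp]: "abs_fralg (dplus q p) = Dplus q (abs_fralg p)"
  by (simp add: dplus_def dlin_def[symmetric] Der.abs_eq)
lemma abs_fralg_dminus[simp]: "abs_fralg (dminus q p) = Dminus q (abs_fralg p)"
  by (simp add: dminus_def dlin_def[symmetric] Der.abs_eq)

lemma Der_add[simp]: "Der dg q (x + y) = Der dg q x + Der dg q y"
  by transfer (simp add: dlin_def)
lemma Der_cscale[simp]: "Der dg q (cscale k x) = cscale k (Der dg q x)"
proof -
  have "dlin dg q (fsc k p) = fsc k (dlin dg q p)" for p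
    by (induction p) (auto simp: dlin_def)
  then show ?thesis unfolding cscale_def by transfer (simp add: fmul_const1)
qed
lemma Der_0[simp]: "Der dg q 0 = 0"
  by transfer (simp add: dlin_def)
lemma Der_uminus[simp]: "Der dg q (- x) = - Der dg q x"
  by (metis Der_add Der_0 add_eq_0_iff2)
lemma Der_diff[simp]: "Der dg q (x - y) = Der dg q x - Der dg q y"
  by (metis Der_add Der_uminus diff_conv_add_uminus)

lemma Der_monom_Cons: "Der dg q (monom (g#w))
    = cscale (of_real (q powi wdeg w)) (abs_fralg (dg g) * monom w) + monom [g] * Der dg q (monom w)"
  by (simp add: monom.abs_eq Der.abs_eq dlin_def fadd_def)

lemma Der_1[simp]: "Der dg q 1 = 0"
proof -
  have "Der dg q (monom []) = 0" by (simp only: monom.abs_eq Der.abs_eq) (simp add: dlin_def)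
  then show ?thesis by simp
qed

lemma Der_monom_single: "Der dg q (monom [g]) = abs_fralg (dg g)"
  using Der_monom_Cons[of dg q g "[]"] by (simp add: monom.abs_eq Der.abs_eq dlin_def)

lemma Der_monom_append: assumes "q \<noteq> 0"
  shows "Der dg q (monom (u@v))
    = cscale (of_real (q powi wdeg v)) (Der dg q (monom u) * monom v) + monom u * Der dg q (monom v)"
proof (induction u)
  case Nil then show ?case by (simp add: monom.abs_eq Der.abs_eq dlin_def)
next
  case (Cons g u)
  have "Der dg q (monom ((g#u)@v)) = cscale (of_real (q powi (wdeg u + wdeg v))) (abs_fralg (dg g) * monom (u@v))
      + monom [g] * Der dg q (monom (u@v))"
    using Der_monom_Cons[of dg q g "u@v"] by (simp add: wdeg_def)
  also have "\<dots> = cscale (of_real (q powi wdeg v)) (Der dg q (monom (g#u)) * monom v)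
      + (monom [g] * monom u) * Der dg q (monom v)"
    unfolding Cons.IH unfolding Der_monom_Cons monom_append using assms
    by (simp add: power_int_add algebra_simps)
  finally show ?case by (simp flip: monom_Cons)
qed

text \<open>The rule \<open>\<partial>(xy) = q\<^sup>|\<^sup>y\<^sup>| (\<partial>x) y + x \<partial>y\<close> encodes \<open>e\<^sup>\<pm> y = q\<^sup>|\<^sup>y\<^sup>| y e\<^sup>\<pm>\<close>.\<close>
lemma Der_leibniz: assumes "q \<noteq> 0" "homogeneous n y"
  shows "Der dg q (x * y) = cscale (of_real (q powi n)) (Der dg q x * y) + x * Der dg q y"
proof (induction x rule: fralg_induct)
  case (monom_add c u x)
  have "Der dg q (monom u * y) = cscale (of_real (q powi n)) (Der dg q (monom u) * y) + monom u * Der dg q y"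
    using assms(2)
    by (induction rule: homogeneous_induct)
       (auto simp: Der_monom_append[OF assms(1)] algebra_simps simp flip: monom_append)
  then show ?case using monom_add by (simp add: algebra_simps)
qed simp

section \<open>The star structure\<close>

lift_definition Star :: "real \<Rightarrow> fralg \<Rightarrow> fralg" is fstar
proof -
  fix q p p' assume "coef_eq p p'"
  then have "lcoef p = lcoef p'" by (simp add: coef_eq_def coef_eq_lcoef)
  then have "\<And>w. sum_list (map (\<lambda>(c,u). cnj c * coef (wstar q u) w) p)
      = sum_list (map (\<lambda>(c,u). cnj c * coef (wstar q u) w) p')"
    by (intro sum_list_cong_lcoef[where F="\<lambda>c v. cnj c * v"]) (auto simp: algebra_simps)
  then show "coef_eq (fstar q p) (fstar q p')"
    by (simp add: coef_eq_def fstar_def coef_concat_fsc fun_eq_iff)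
qed

lemma abs_fralg_fstar[simp]: "abs_fralg (fstar q p) = Star q (abs_fralg p)"
  by (simp add: Star.abs_eq)

lemma Star_add[simp]: "Star q (x + y) = Star q x + Star q y"
  by transfer (simp add: fstar_def)
lemma Star_cscale[simp]: "Star q (cscale k x) = cscale (cnj k) (Star q x)"
proof -
  have "fstar q (fsc k p) = fsc (cnj k) (fstar q p)" for p
    by (induction p) (auto simp: fstar_def)
  then show ?thesis unfolding cscale_def by transfer (simp add: fmul_const1)
qed
lemma Star_0[simp]: "Star q 0 = 0"
  by transfer (simp add: fstar_def)
lemma Star_uminus[simp]: "Star q (- x) = - Star q x"
  by (metis Star_add Star_0 add_eq_0_iff2)
lemma Star_diff[simp]: "Star q (x - y) = Star q x - Star q y"
  by (metis Star_add Star_uminus diff_conv_add_uminus)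

lemma Star_monom: "Star q (monom u) = abs_fralg (wstar q u)"
  by (simp add: monom.abs_eq Star.abs_eq fstar_def)

lemma Star_1[simp]: "Star q 1 = 1"
  using Star_monom[of q "[]"] by simp

lemma Star_monom_single: "Star q (monom [g]) = abs_fralg (gstar q g)"
  by (simp add: Star_monom)

lemma Star_monom_append: "Star q (monom (u@v)) = Star q (monom v) * Star q (monom u)"
  by (induction u) (simp_all add: Star_monom mult.assoc)

lemma Star_mult: "Star q (x * y) = Star q y * Star q x"
proof (induction x rule: fralg_induct)
  case (monom_add c u x)
  have "Star q (monom u * y) = Star q y * Star q (monom u)"
  proof (induction y rule: fralg_induct)
    case (monom_add c v y)
    then show ?case by (simp add: distrib_left distrib_right Star_monom_append flip: monom_append)
  qed simp
  then show ?case using monom_add by (simp add: distrib_left distrib_right)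
qed simp

lemma Star_Star_monom_single: "q \<noteq> 0 \<Longrightarrow> Star q (Star q (monom [g])) = monom [g]"
  by (cases g) (simp_all add: Star_monom_single)

lemma Star_Star: assumes "q \<noteq> 0" shows "Star q (Star q x) = x"
proof -
  note gen = Star_Star_monom_single[OF assms]
  have monom: "Star q (Star q (monom u)) = monom u" for u
  proof (induction u)
    case (Cons g u) then show ?case
      by (subst (1 2) monom_Cons) (simp add: Star_mult gen)
  qed (simp add: Star_monom)
  show ?thesis
    by (induction x rule: fralg_induct) (simp_all add: monom)
qed

lemma homog_wstar: "homog (- wdeg w) (wstar q w)"
proof (induction w)
  case (Cons g w)
  have "homog (- gdeg g) (gstar q g)" by (cases g) (auto simp: fgen_def fsc_def)
  then show ?case using homog_fmul[OF Cons] by (simp add: algebra_simps)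
qed (simp add: fconst_def)

lemma homogeneous_Star: assumes "homogeneous n x" shows "homogeneous (-n) (Star q x)"
proof -
  obtain p where p: "homog n p" "x = abs_fralg p" using assms homogeneous_def by auto
  have "homog (- n) (fstar q p)"
    using p(1)
  proof (induction p)
    case (Cons a p) then show ?case
      using homog_wstar[of "snd a" q] by (cases a) (simp add: fstar_def)
  qed (simp add: fstar_def)
  then show ?thesis using homogeneous_abs p(2) by fastforce
qed

section \<open>The ideal of relations of \<open>\<C>\<^sub>q[SU\<^sub>2]\<close>\<close>

definition relideal :: "real \<Rightarrow> fralg set" where
  "relideal q = abs_fralg ` qideal q"

definition qrel :: "real \<Rightarrow> nat \<Rightarrow> fralg" where
  "qrel q i = abs_fralg (qrels q ! i)"

abbreviation "gA \<equiv> monom [GA]"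
abbreviation "gB \<equiv> monom [GB]"
abbreviation "gC \<equiv> monom [GC]"
abbreviation "gD \<equiv> monom [GD]"

lemma length_qrels: "length (qrels q) = 7"
  by (simp add: qrels_def Let_def)

lemma relideal_induct[consumes 1, case_names zero add scale generator]:
  assumes "x \<in> relideal q" and "P 0"
    and "\<And>x y. P x \<Longrightarrow> P y \<Longrightarrow> P (x + y)" and "\<And>k x. P x \<Longrightarrow> P (cscale k x)"
    and "\<And>i u v. i < 7 \<Longrightarrow> P (monom u * qrel q i * monom v)"
  shows "P x"
proof -
  obtain r where r: "r \<in> qideal q" "x = abs_fralg r" using assms(1) unfolding relideal_def by auto
  have "P (abs_fralg r)" using r(1)
  proof (induction rule: qideal.induct)
    case (qideal_gen i u v)
    then show ?case using assms(5)[of i u v] by (simp add: qrel_def monom.abs_eq length_qrels)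
  qed (simp_all add: assms(2-4))
  then show ?thesis using r(2) by simp
qed

lemma relideal_0[simp]: "0 \<in> relideal q"
  unfolding relideal_def by (metis abs_fralg_Nil image_eqI qideal_nil)
lemma relideal_add: "x \<in> relideal q \<Longrightarrow> y \<in> relideal q \<Longrightarrow> x + y \<in> relideal q"
  unfolding relideal_def by (auto intro!: image_eqI[where x="_ @ _"] qideal_add)
lemma relideal_cscale: "x \<in> relideal q \<Longrightarrow> cscale k x \<in> relideal q"
  unfolding relideal_def by (auto intro!: image_eqI[where x="fsc _ _"] qideal_sc)
lemma relideal_uminus: "x \<in> relideal q \<Longrightarrow> - x \<in> relideal q"
  using relideal_cscale[of x q "-1"] by (simp add: cscale_minus_scalar)
lemma relideal_diff: "x \<in> relideal q \<Longrightarrow> y \<in> relideal q \<Longrightarrow> x - y \<in> relideal q"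
  by (metis relideal_add relideal_uminus diff_conv_add_uminus)

lemma monom_qrel_monom_in_relideal: "i < 7 \<Longrightarrow> monom u * qrel q i * monom v \<in> relideal q"
  unfolding relideal_def qrel_def
  by (auto simp: monom.abs_eq length_qrels intro!: image_eqI[where x="fmul (fmul _ _) _"] qideal_gen)

lemma qrel_in_relideal: "i < 7 \<Longrightarrow> qrel q i \<in> relideal q"
  using monom_qrel_monom_in_relideal[of i "[]" q "[]"] by simp

lemma relideal_monom_mult: "x \<in> relideal q \<Longrightarrow> monom w * x * monom w' \<in> relideal q"
proof (induction rule: relideal_induct)
  case (generator i u v)
  have "monom w * (monom u * qrel q i * monom v) * monom w' = monom (w@u) * qrel q i * monom (v@w')"
    by (simp add: monom_append mult.assoc)
  then show ?case using monom_qrel_monom_in_relideal[OF generator] by simp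
qed (simp_all add: distrib_left distrib_right relideal_add relideal_cscale)

lemma relideal_mult_left: assumes "x \<in> relideal q" shows "y * x \<in> relideal q"
  using relideal_monom_mult[OF assms, of _ "[]"]
  by (induction y rule: fralg_induct) (auto simp: distrib_right relideal_add relideal_cscale)

lemma relideal_mult_right: assumes "x \<in> relideal q" shows "x * y \<in> relideal q"
  using relideal_monom_mult[OF assms, of "[]"]
  by (induction y rule: fralg_induct) (auto simp: distrib_left relideal_add relideal_cscale)

lemma coef_Cons_of_bool: "coef ((c,u)#p) w = c * of_bool (u = w) + coef p w"
  by (simp add: coef_Cons)

lemmas fralg_to_list =
  monom.abs_eq abs_fralg_fsc[symmetric] abs_fralg_append[symmetric] abs_fralg_fmul[symmetric]
  abs_fralg_fneg[symmetric] abs_fralg_fsub[symmetric] one_fralg.abs_eq zero_fralg.abs_eq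
  Der.abs_eq Star.abs_eq

lemma Dplus_qrel: assumes "q \<noteq> 0" shows
  "Dplus q (qrel q 0) = 0"
  "Dplus q (qrel q 1) = cscale ((of_real q)^2) (qrel q 5) - cscale (of_real q) (qrel q 4)"
  "Dplus q (qrel q 2) = 0"
  "Dplus q (qrel q 3) = 0"
  "Dplus q (qrel q 4) = - qrel q 2"
  "Dplus q (qrel q 5) = cscale (of_real q) (qrel q 2)"
  "Dplus q (qrel q 6) = 0"
  using assms
  by (simp_all only: fralg_to_list qrel_def abs_fralg_eq_iff)
    (simp_all add: fun_eq_iff coef_Cons_of_bool fmul_def qrels_def Let_def
      fsub_def fneg_def fconst_def fgen_def dlin_def fadd_def field_simps power2_eq_square)

lemma Dminus_qrel: assumes "q \<noteq> 0" shows
  "Dminus q (qrel q 0) = 0"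
  "Dminus q (qrel q 1) = 0"
  "Dminus q (qrel q 2) = qrel q 5 - cscale (inverse (of_real q)) (qrel q 4)"
  "Dminus q (qrel q 3) = 0"
  "Dminus q (qrel q 4) = - qrel q 1"
  "Dminus q (qrel q 5) = cscale (of_real q) (qrel q 1)"
  "Dminus q (qrel q 6) = 0"
  using assms
  by (simp_all only: fralg_to_list qrel_def abs_fralg_eq_iff)
    (simp_all add: fun_eq_iff coef_Cons_of_bool fmul_def qrels_def Let_def
      fsub_def fneg_def fconst_def fgen_def dlin_def fadd_def field_simps power2_eq_square)

lemma less_7_cases: "(i::nat) < 7 \<Longrightarrow> P 0 \<Longrightarrow> P 1 \<Longrightarrow> P 2 \<Longrightarrow> P 3 \<Longrightarrow> P 4 \<Longrightarrow> P 5 \<Longrightarrow> P 6 \<Longrightarrow> P i"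
  by (subgoal_tac "i = 0 \<or> i = 1 \<or> i = 2 \<or> i = 3 \<or> i = 4 \<or> i = 5 \<or> i = 6") auto

lemma homogeneous_qrel: "i < 7 \<Longrightarrow> \<exists>n. homogeneous n (qrel q i)"
  unfolding qrel_def
  by (erule less_7_cases; rule exI, rule homogeneous_abs)
     (simp_all add: qrels_def Let_def fsub_def fneg_def fconst_def fgen_def fmul_def fsc_def wdeg_def)

lemma Der_relideal:
  assumes q: "q \<noteq> 0" and rel: "\<And>i. i < 7 \<Longrightarrow> Der dg q (qrel q i) \<in> relideal q"
    and x: "x \<in> relideal q"
  shows "Der dg q x \<in> relideal q"
  using x
proof (induction rule: relideal_induct)
  case (generator i u v)
  obtain n where n: "homogeneous n (qrel q i)" using homogeneous_qrel[OF generator] by blast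
  have "Der dg q (monom u) * qrel q i \<in> relideal q" "monom u * Der dg q (qrel q i) \<in> relideal q"
    "monom u * qrel q i * Der dg q (monom v) \<in> relideal q"
    using qrel_in_relideal[OF generator] rel[OF generator]
    by (auto intro: relideal_mult_left relideal_mult_right)
  then show ?case
    unfolding Der_leibniz[OF q homogeneous_monom] Der_leibniz[OF q n]
    by (intro relideal_add relideal_cscale relideal_mult_right[of "_ + _"])
qed (simp_all add: relideal_add relideal_cscale)

lemma Dplus_relideal: assumes "q \<noteq> 0" "x \<in> relideal q" shows "Dplus q x \<in> relideal q"
  by (rule Der_relideal[OF assms(1) _ assms(2)], erule less_7_cases)
     (simp_all only: Dplus_qrel[OF assms(1)],
      auto intro!: relideal_cscale relideal_diff relideal_uminus qrel_in_relideal)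

lemma Dminus_relideal: assumes "q \<noteq> 0" "x \<in> relideal q" shows "Dminus q x \<in> relideal q"
  by (rule Der_relideal[OF assms(1) _ assms(2)], erule less_7_cases)
     (simp_all only: Dminus_qrel[OF assms(1)],
      auto intro!: relideal_cscale relideal_diff relideal_uminus qrel_in_relideal)

definition qcong :: "real \<Rightarrow> fralg \<Rightarrow> fralg \<Rightarrow> bool" where
  "qcong q x y \<longleftrightarrow> x - y \<in> relideal q"

lemma qcong_refl[simp]: "qcong q x x"
  by (simp add: qcong_def)
lemma qcong_sym: "qcong q x y \<Longrightarrow> qcong q y x"
  unfolding qcong_def by (metis relideal_uminus minus_diff_eq)
lemma qcong_trans: "qcong q x y \<Longrightarrow> qcong q y z \<Longrightarrow> qcong q x z"
  unfolding qcong_def by (metis relideal_add diff_add_cancel add_diff_eq)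
lemma qcong_common_rhs: "qcong q x x' \<Longrightarrow> qcong q y y' \<Longrightarrow> x' = y' \<Longrightarrow> qcong q x y"
  using qcong_sym qcong_trans by blast
lemma qcong_add: "qcong q x y \<Longrightarrow> qcong q x' y' \<Longrightarrow> qcong q (x + x') (y + y')"
  unfolding qcong_def by (metis relideal_add add_diff_add)
lemma qcong_cscale: "qcong q x y \<Longrightarrow> qcong q (cscale k x) (cscale k y)"
  unfolding qcong_def by (metis relideal_cscale cscale_diff)
lemma qcong_mult_left: "qcong q x y \<Longrightarrow> qcong q (z * x) (z * y)"
  unfolding qcong_def by (metis relideal_mult_left right_diff_distrib)
lemma qcong_mult_right: "qcong q x y \<Longrightarrow> qcong q (x * z) (y * z)"
  unfolding qcong_def by (metis relideal_mult_right left_diff_distrib)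
lemma qcong_Dplus: "q \<noteq> 0 \<Longrightarrow> qcong q x y \<Longrightarrow> qcong q (Dplus q x) (Dplus q y)"
  unfolding qcong_def by (metis Dplus_relideal Der_diff)
lemma qcong_Dminus: "q \<noteq> 0 \<Longrightarrow> qcong q x y \<Longrightarrow> qcong q (Dminus q x) (Dminus q y)"
  unfolding qcong_def by (metis Dminus_relideal Der_diff)

lemma fzero_iff_relideal: "fzero q p \<longleftrightarrow> abs_fralg p \<in> relideal q"
  unfolding fzero_def relideal_def by (auto simp: abs_fralg_eq_iff[symmetric] image_iff)

abbreviation Fst :: "pr \<Rightarrow> fralg" where "Fst m \<equiv> abs_fralg (fst m)"
abbreviation Snd :: "pr \<Rightarrow> fralg" where "Snd m \<equiv> abs_fralg (snd m)"

lemma peq_iff_qcong: "peq q m m' \<longleftrightarrow> qcong q (Fst m) (Fst m') \<and> qcong q (Snd m) (Snd m')"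
  by (simp add: peq_def pzero_def psub_def padd_def pneg_def psc_def fzero_iff_relideal qcong_def
      fadd_def cscale_minus_scalar)

lemma peq_eqI: "Fst m = Fst m' \<Longrightarrow> Snd m = Snd m' \<Longrightarrow> peq q m m'"
  by (simp add: peq_iff_qcong)

section \<open>Star versus derivations\<close>

text \<open>On generators this is read off from \<open>\<pi>da = q b e\<^sup>+\<close>, \<open>\<pi>db = a e\<^sup>-\<close>, \<open>\<pi>dc = q d e\<^sup>+\<close>,
  \<open>\<pi>dd = c e\<^sup>-\<close> and \<open>a\<^sup>* = d\<close>, \<open>b\<^sup>* = -q\<^sup>-\<^sup>1c\<close>, \<open>c\<^sup>* = -qb\<close>, \<open>d\<^sup>* = a\<close>.\<close>
lemma Star_dminus_gen: "q \<noteq> 0 \<Longrightarrow>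
    Star q (abs_fralg (dminus_gen q g)) = - cscale (of_real (q powi (gdeg g + 1))) (Dplus q (Star q (monom [g])))"
  by (cases g) (simp_all add: Star_monom_single Der_monom_single cscale_minus_scalar)

lemma Star_Dminus_monom: assumes q: "q \<noteq> 0"
  shows "Star q (Dminus q (monom w)) = - cscale (of_real (q powi (wdeg w + 1))) (Dplus q (Star q (monom w)))"
proof (induction w)
  case (Cons g w)
  have hS: "homogeneous (- gdeg g) (Star q (monom [g]))"
    using homogeneous_Star[OF homogeneous_monom[of "[g]"]] by (simp add: wdeg_def)
  have "Star q (Dminus q (monom (g#w)))
      = cscale (of_real (q powi wdeg w)) (Star q (monom w) * Star q (abs_fralg (dminus_gen q g)))
        + Star q (Dminus q (monom w)) * Star q (monom [g])"
    by (simp add: Der_monom_Cons Star_mult)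
  also have "\<dots> = - cscale (of_real (q powi (wdeg (g#w) + 1))) (Dplus q (Star q (monom w) * Star q (monom [g])))"
    unfolding Cons Star_dminus_gen[OF q] Der_leibniz[OF q hS]
    using q by (simp add: power_int_add power_int_minus field_simps)
  also have "Star q (monom w) * Star q (monom [g]) = Star q (monom (g#w))"
    by (metis Star_mult monom_Cons)
  finally show ?case .
qed simp

lemma Star_Dminus: assumes q: "q \<noteq> 0" and x: "homogeneous n x"
  shows "Star q (Dminus q x) = - cscale (of_real (q powi (n + 1))) (Dplus q (Star q x))"
  using x by (induction rule: homogeneous_induct) (simp_all add: Star_Dminus_monom[OF q] mult.commute)

lemma Star_Dplus: assumes q: "q \<noteq> 0" and y: "homogeneous 1 y"
  shows "Star q (Dplus q y) = - Dminus q (Star q y)"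
proof -
  have "Star q (Dminus q (Star q y)) = - cscale (of_real (q powi (-1 + 1))) (Dplus q (Star q (Star q y)))"
    using Star_Dminus[OF q homogeneous_Star[OF y]] .
  then have "Dplus q y = - Star q (Dminus q (Star q y))"
    by (simp add: Star_Star[OF q])
  then show ?thesis
    by (simp add: Star_Star[OF q])
qed

section \<open>Balanced tensor products\<close>

lemma tcoef_Nil[simp]: "tcoef [] k = 0"
  by (simp add: tcoef_def)
lemma tsc_Nil[simp]: "tsc k [] = []"
  by (simp add: tsc_def)
lemma tcoef_Cons[simp]: "tcoef ((c,x)#t) k = c * of_bool (x = k) + tcoef t k"
  by (simp add: tcoef_def)
lemma tcoef_append[simp]: "tcoef (t@t') k = tcoef t k + tcoef t' k"
  by (simp add: tcoef_def)
lemma tsc_Cons[simp]: "tsc k ((c,x)#t) = (k*c,x) # tsc k t"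
  by (simp add: tsc_def)
lemma tsc_append[simp]: "tsc k (t@t') = tsc k t @ tsc k t'"
  by (simp add: tsc_def)
lemma tcoef_tsc[simp]: "tcoef (tsc k t) x = k * tcoef t x"
  by (induction t) (auto simp: algebra_simps)
lemma tcoef_tsub: "tcoef (tsub t t') x = tcoef t x - tcoef t' x"
  by (simp add: tsub_def)

definition null_coef :: "real \<Rightarrow> (pr \<Rightarrow> bool) \<Rightarrow> (pr \<Rightarrow> bool) \<Rightarrow> (pr \<times> pr \<Rightarrow> complex) \<Rightarrow> bool" where
  "null_coef q M N f \<longleftrightarrow> (\<exists>r \<in> tnull q M N. f = tcoef r)"

lemma teq_iff_null_coef: "teq q M N t t' \<longleftrightarrow> null_coef q M N (\<lambda>x. tcoef t x - tcoef t' x)"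
  by (simp add: teq_def null_coef_def tcoef_tsub[abs_def])

lemma null_coef_0: "null_coef q M N (\<lambda>x. 0)"
  unfolding null_coef_def by (rule bexI[of _ "[]"]) (auto intro: tn_nil)
lemma null_coef_add: "null_coef q M N f \<Longrightarrow> null_coef q M N g \<Longrightarrow> null_coef q M N (\<lambda>x. f x + g x)"
  unfolding null_coef_def by (auto intro!: bexI[of _ "_ @ _"] tn_add)
lemma null_coef_scale: "null_coef q M N f \<Longrightarrow> null_coef q M N (\<lambda>x. k * f x)"
  unfolding null_coef_def by (auto intro!: bexI[of _ "tsc _ _"] tn_sc)
lemma null_coef_cong: "null_coef q M N f \<Longrightarrow> (\<And>x. f x = g x) \<Longrightarrow> null_coef q M N g"
  by (metis ext)

lemma teq_tcoef: "tcoef t = tcoef t' \<Longrightarrow> teq q M N t t'"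
  unfolding teq_iff_null_coef by (simp add: null_coef_0)
lemma teq_refl[simp]: "teq q M N t t"
  by (rule teq_tcoef) simp
lemma teq_sym: "teq q M N t t' \<Longrightarrow> teq q M N t' t"
  unfolding teq_iff_null_coef by (drule null_coef_scale[where k="-1"]) (erule null_coef_cong, simp)
lemma teq_trans[trans]: "teq q M N t t' \<Longrightarrow> teq q M N t' t'' \<Longrightarrow> teq q M N t t''"
  unfolding teq_iff_null_coef by (drule (1) null_coef_add) (erule null_coef_cong, simp)
lemma teq_append: "teq q M N t1 t1' \<Longrightarrow> teq q M N t2 t2' \<Longrightarrow> teq q M N (t1@t2) (t1'@t2')"
  unfolding teq_iff_null_coef by (drule (1) null_coef_add) (erule null_coef_cong, simp)
lemma teq_Cons: "teq q M N [x] t1' \<Longrightarrow> teq q M N t2 t2' \<Longrightarrow> teq q M N (x#t2) (t1'@t2')"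
  using teq_append[of q M N "[x]" t1' t2 t2'] by simp

lemma teq_by_tnull:
  "r \<in> tnull q M N \<Longrightarrow> (\<And>x. tcoef t x - tcoef t' x = c * tcoef r x) \<Longrightarrow> teq q M N t t'"
  unfolding teq_iff_null_coef null_coef_def
  by (rule bexI[of _ "tsc c r"]) (auto intro: tn_sc)

lemma teq_addL: "M m1 \<Longrightarrow> M m2 \<Longrightarrow> N n \<Longrightarrow> teq q M N [(c, padd m1 m2, n)] [(c,m1,n),(c,m2,n)]"
  by (rule teq_by_tnull[OF tn_addL, where c=c]) (auto simp: algebra_simps)
lemma teq_addR: "M m \<Longrightarrow> N n1 \<Longrightarrow> N n2 \<Longrightarrow> teq q M N [(c, m, padd n1 n2)] [(c,m,n1),(c,m,n2)]"
  by (rule teq_by_tnull[OF tn_addR, where c=c]) (auto simp: algebra_simps)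
lemma teq_scL: "M m \<Longrightarrow> N n \<Longrightarrow> teq q M N [(c, psc k m, n)] [(c*k,m,n)]"
  by (rule teq_by_tnull[OF tn_scL, where c=c]) (auto simp: algebra_simps)
lemma teq_scR: "M m \<Longrightarrow> N n \<Longrightarrow> teq q M N [(c, m, psc k n)] [(c*k,m,n)]"
  by (rule teq_by_tnull[OF tn_scR, where c=c]) (auto simp: algebra_simps)
lemma teq_bal: "homog 0 b \<Longrightarrow> M m \<Longrightarrow> N n \<Longrightarrow> teq q M N [(c, prmul m b, n)] [(c, m, plmul b n)]"
  by (rule teq_by_tnull[OF tn_bal, where c=c]) (auto simp: algebra_simps)
lemma teq_repL: "M m \<Longrightarrow> M m' \<Longrightarrow> peq q m m' \<Longrightarrow> N n \<Longrightarrow> teq q M N [(c, m, n)] [(c, m', n)]"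
  by (rule teq_by_tnull[OF tn_repL, where c=c]) (auto simp: algebra_simps)
lemma teq_repR: "M m \<Longrightarrow> N n \<Longrightarrow> N n' \<Longrightarrow> peq q n n' \<Longrightarrow> teq q M N [(c, m, n)] [(c, m, n')]"
  by (rule teq_by_tnull[OF tn_repR, where c=c]) (auto simp: algebra_simps)

lemma teq_zero_left: assumes "M ([],[])" "N n" shows "teq q M N [(c, ([],[]), n)] []"
proof -
  have "teq q M N [(c, ([],[]), n)] [(c*0, ([],[]), n)]"
    using teq_scL[of M "([],[])" N n q c 0] assms by (simp add: psc_def)
  also have "teq q M N \<dots> []"
    by (rule teq_tcoef) (simp add: fun_eq_iff)
  finally show ?thesis .
qed

lemma pr_component_simps[simp]:
  "fst (psc k m) = fsc k (fst m)" "snd (psc k m) = fsc k (snd m)"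
  "fst (padd m m') = fadd (fst m) (fst m')" "snd (padd m m') = fadd (snd m) (snd m')"
  "fst (plmul b m) = fmul b (fst m)" "snd (plmul b m) = fmul b (snd m)"
  "fst (prmul m b) = fmul (fst m) b" "snd (prmul m b) = fmul (snd m) b"
  "fst (pd q x) = dplus q x" "snd (pd q x) = dminus q x"
  by (simp_all add: psc_def padd_def plmul_def prmul_def pd_def)

lemma homog_fgen[simp]: "homog n (fgen g) \<longleftrightarrow> gdeg g = n"
  by (simp add: fgen_def)

lemma wfS_psc: "wfS m \<Longrightarrow> wfS (psc k m)"
  by (simp add: wfS_def)
lemma wfS_padd: "wfS m \<Longrightarrow> wfS m' \<Longrightarrow> wfS (padd m m')"
  by (simp add: wfS_def fadd_def)
lemma wfS_plmul: "homog 0 b \<Longrightarrow> wfS m \<Longrightarrow> wfS (plmul b m)"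
  using homog_fmul[of 0 b] by (simp add: wfS_def)
lemma wfOm_plmul: "homog 0 b \<Longrightarrow> wfOm m \<Longrightarrow> wfOm (plmul b m)"
  using homog_fmul[of 0 b] by (simp add: wfOm_def)
lemma wfS_prmul: "homog 0 b \<Longrightarrow> wfS m \<Longrightarrow> wfS (prmul m b)"
  using homog_fmul[of _ _ 0 b] by (simp add: wfS_def)
lemma wfOm_prmul: "homog 0 b \<Longrightarrow> wfOm m \<Longrightarrow> wfOm (prmul m b)"
  using homog_fmul[of _ _ 0 b] by (simp add: wfOm_def)
lemma wfS_frame: "wfS (gd,[])" "wfS (gb,[])" "wfS ([],ga)" "wfS ([],gc)"
  by (simp_all add: wfS_def)

lemma twf_Nil[simp]: "twf M N []"
  by (simp add: twf_def)
lemma twf_Cons[simp]: "twf M N ((c,m,n)#t) \<longleftrightarrow> M m \<and> N n \<and> twf M N t"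
  by (simp add: twf_def)
lemma twf_append[simp]: "twf M N (t@t') \<longleftrightarrow> twf M N t \<and> twf M N t'"
  unfolding twf_def by (simp only: set_append ball_Un)

abbreviation teq_OS :: "real \<Rightarrow> ten \<Rightarrow> ten \<Rightarrow> bool" where
  "teq_OS q \<equiv> teq q wfOm wfS"

section \<open>The frame of \<open>\<Omega>\<^sup>1 \<otimes>\<^sub>B \<S>\<close> given by the quantum determinant\<close>

abbreviation qdet_plus :: "real \<Rightarrow> fralg" where
  "qdet_plus q \<equiv> gA*gD - cscale (inverse (complex_of_real q)) (gC*gB)"
abbreviation qdet_minus :: "real \<Rightarrow> fralg" where
  "qdet_minus q \<equiv> gD*gA - cscale (complex_of_real q) (gB*gC)"

lemma qdet_eq_qrel:
  "qdet_plus q - 1 = qrel q 6 + cscale (inverse (of_real q)) (qrel q 4)"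
  "qdet_minus q - 1 = qrel q 5 + qrel q 6"
  by (simp_all only: fralg_to_list qrel_def abs_fralg_eq_iff)
    (simp_all add: fun_eq_iff coef_Cons_of_bool fmul_def qrels_def Let_def
      fsub_def fneg_def fconst_def fgen_def fadd_def field_simps)

lemma qcong_qdet:
  "qcong q (x * qdet_plus q * y) (x * y)" "qcong q (x * qdet_minus q * y) (x * y)"
proof -
  have "qdet_plus q - 1 \<in> relideal q" "qdet_minus q - 1 \<in> relideal q"
    unfolding qdet_eq_qrel by (auto intro!: relideal_add relideal_cscale qrel_in_relideal)
  moreover have "x * U * y - x * y = x * (U - 1) * y" for U :: fralg
    by (simp add: algebra_simps)
  ultimately show "qcong q (x * qdet_plus q * y) (x * y)" "qcong q (x * qdet_minus q * y) (x * y)"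
    unfolding qcong_def by (metis relideal_mult_left relideal_mult_right)+
qed

lemma qcong_qdet_right: "qcong q (x * qdet_plus q) x" "qcong q (x * qdet_minus q) x"
  using qcong_qdet[of q x 1] by simp_all

text \<open>\<open>shape q u v\<close> is \<open>u (a \<otimes> d f\<^sup>+ - q\<^sup>-\<^sup>1 c \<otimes> b f\<^sup>+) + v (d \<otimes> a f\<^sup>- - q b \<otimes> c f\<^sup>-)\<close> for
  horizontal forms \<open>u, v\<close>; both \<open>\<nabla>\<^sub>\<S>\<close> and \<open>\<sigma>\<^sub>\<S>\<close> are defined in this form.\<close>
definition shape :: "real \<Rightarrow> pr \<Rightarrow> pr \<Rightarrow> ten" where
  "shape q u v = [(1, prmul u ga, (gd,[])), (- inverse (of_real q), prmul u gc, (gb,[])),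
                  (1, prmul v gd, ([],ga)), (- of_real q, prmul v gb, ([],gc))]"

definition coord_plus :: "ten \<Rightarrow> pr" where
  "coord_plus u = (concat (map (\<lambda>(c,\<omega>,z). fsc c (fmul (fst \<omega>) (fst z))) u),
                   concat (map (\<lambda>(c,\<omega>,z). fsc c (fmul (snd \<omega>) (fst z))) u))"
definition coord_minus :: "ten \<Rightarrow> pr" where
  "coord_minus u = (concat (map (\<lambda>(c,\<omega>,z). fsc c (fmul (fst \<omega>) (snd z))) u),
                    concat (map (\<lambda>(c,\<omega>,z). fsc c (fmul (snd \<omega>) (snd z))) u))"

definition wf_coord_plus :: "pr \<Rightarrow> bool" where
  "wf_coord_plus a \<longleftrightarrow> homog (-3) (fst a) \<and> homog 1 (snd a)"
definition wf_coord_minus :: "pr \<Rightarrow> bool" where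
  "wf_coord_minus b \<longleftrightarrow> homog (-1) (fst b) \<and> homog 3 (snd b)"

lemma prmul_psc: "prmul (psc k m) z = psc k (prmul m z)"
  by (simp add: prmul_def psc_def fmul_fsc1)

lemma nablaS_eq_shape:
  "nablaS q s = shape q (psc (of_real q) (pd q (fst s))) (psc (inverse (of_real q)) (pd q (snd s)))"
  by (simp add: nablaS_def shape_def hmul_def prmul_psc Let_def)
lemma sigmaS1_eq_shape:
  "sigmaS1 q s w = shape q (psc (of_real q) (plmul (fst s) w)) (psc (inverse (of_real q)) (plmul (snd s) w))"
  by (simp add: sigmaS1_def shape_def hmul_def prmul_psc Let_def)

lemma shape_parts_wf: "wf_coord_plus a \<Longrightarrow> wf_coord_minus b \<Longrightarrow>
    wfOm (prmul a ga) \<and> wfOm (prmul a gc) \<and> wfOm (prmul b gd) \<and> wfOm (prmul b gb)"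
  unfolding wf_coord_plus_def wf_coord_minus_def wfOm_def
  using homog_fmul[of "-3" _ 1] homog_fmul[of 1 _ 1] homog_fmul[of "-1" _ "-1"] homog_fmul[of 3 _ "-1"]
  by auto

lemma twf_shape: "wf_coord_plus a \<Longrightarrow> wf_coord_minus b \<Longrightarrow> twf wfOm wfS (shape q a b)"
  using shape_parts_wf[of a b] by (simp add: shape_def wfS_frame)

lemma coord_plus_Nil[simp]: "coord_plus [] = ([],[])"
  by (simp add: coord_plus_def)
lemma coord_minus_Nil[simp]: "coord_minus [] = ([],[])"
  by (simp add: coord_minus_def)
lemma coord_plus_Cons: "coord_plus (x#t) = padd (coord_plus [x]) (coord_plus t)"
  by (simp add: coord_plus_def padd_def fadd_def split_def)
lemma coord_minus_Cons: "coord_minus (x#t) = padd (coord_minus [x]) (coord_minus t)"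
  by (simp add: coord_minus_def padd_def fadd_def split_def)

lemma wf_coords_conj: "twf wfOm wfS u \<Longrightarrow> wf_coord_plus (coord_plus u) \<and> wf_coord_minus (coord_minus u)"
proof (induction u)
  case Nil then show ?case
    by (simp add: wf_coord_plus_def wf_coord_minus_def coord_plus_def coord_minus_def)
next
  case (Cons x t) obtain c \<omega> z where x: "x = (c,\<omega>,z)" by (cases x) auto
  then have w: "wfOm \<omega>" "wfS z" "twf wfOm wfS t" using Cons.prems by auto
  show ?case
    using Cons.IH[OF w(3)] w(1,2) homog_fmul[of "-2" "fst \<omega>" "-1" "fst z"]
      homog_fmul[of 2 "snd \<omega>" "-1" "fst z"] homog_fmul[of "-2" "fst \<omega>" 1 "snd z"]
      homog_fmul[of 2 "snd \<omega>" 1 "snd z"]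
    by (subst coord_plus_Cons, subst coord_minus_Cons)
       (auto simp: x wf_coord_plus_def wf_coord_minus_def wfOm_def wfS_def
          coord_plus_def coord_minus_def padd_def fadd_def)
qed

lemmas wf_coords = wf_coords_conj[THEN conjunct1] wf_coords_conj[THEN conjunct2]

lemma teq_move_scalar: assumes "wfOm \<omega>" "homog 0 u" "wfS P"
  shows "teq_OS q [(c, \<omega>, psc k (plmul u P))] [(k, psc c (prmul \<omega> u), P)]"
proof -
  have "teq_OS q [(c, \<omega>, psc k (plmul u P))] [(c*k, \<omega>, plmul u P)]"
    using assms by (intro teq_scR wfS_plmul)
  also have "teq_OS q \<dots> [(c*k, prmul \<omega> u, P)]"
    using assms by (intro teq_sym[OF teq_bal])
  also have "teq_OS q \<dots> [(k, psc c (prmul \<omega> u), P)]"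
    using teq_sym[OF teq_scL[of wfOm "prmul \<omega> u" wfS P q k c]] assms wfOm_prmul
    by (simp add: mult.commute)
  finally show ?thesis .
qed

text \<open>The spinor is rewritten as \<open>z = z\<^sub>1(ad - q\<^sup>-\<^sup>1cb) + z\<^sub>2(da - qbc)\<close> and the balanced
  tensor product moves the degree-\<open>0\<close> parts \<open>z\<^sub>1a, z\<^sub>1c, z\<^sub>2d, z\<^sub>2b\<close> onto the form.\<close>
lemma teq_single_shape: assumes w: "wfOm \<omega>" "wfS z"
  shows "teq_OS q [(c, \<omega>, z)] (shape q (coord_plus [(c,\<omega>,z)]) (coord_minus [(c,\<omega>,z)]))"
proof -
  define Q where "Q = complex_of_real q"
  define u1 where "u1 = fmul (fst z) ga"
  define u2 where "u2 = fmul (fst z) gc"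
  define u3 where "u3 = fmul (snd z) gd"
  define u4 where "u4 = fmul (snd z) gb"
  have hu: "homog 0 u1" "homog 0 u2" "homog 0 u3" "homog 0 u4"
    using w(2) homog_fmul[of "-1" "fst z" 1] homog_fmul[of 1 "snd z" "-1"]
    by (simp_all add: u1_def u2_def u3_def u4_def wfS_def)
  define y1 where "y1 = psc 1 (plmul u1 (gd,[]))"
  define y2 where "y2 = psc (- inverse Q) (plmul u2 (gb,[]))"
  define y3 where "y3 = psc 1 (plmul u3 ([],ga))"
  define y4 where "y4 = psc (- Q) (plmul u4 ([],gc))"
  have wy: "wfS y1" "wfS y2" "wfS y3" "wfS y4"
    unfolding y1_def y2_def y3_def y4_def using hu
    by (auto intro!: wfS_psc wfS_plmul simp: wfS_frame)
  have wy': "wfS (padd y3 y4)" "wfS (padd y2 (padd y3 y4))" "wfS (padd y1 (padd y2 (padd y3 y4)))"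
    using wy by (auto intro!: wfS_padd)
  have "Fst (padd y1 (padd y2 (padd y3 y4))) = Fst z * qdet_plus q"
    "Snd (padd y1 (padd y2 (padd y3 y4))) = Snd z * qdet_minus q"
    by (simp_all add: y1_def y2_def y3_def y4_def u1_def u2_def u3_def u4_def Q_def algebra_simps
        cscale_minus_scalar)
  then have z: "peq q z (padd y1 (padd y2 (padd y3 y4)))"
    unfolding peq_iff_qcong by (simp add: qcong_sym[OF qcong_qdet_right(1)] qcong_sym[OF qcong_qdet_right(2)])
  have "teq_OS q [(c, \<omega>, z)] [(c, \<omega>, padd y1 (padd y2 (padd y3 y4)))]"
    by (rule teq_repR[where M=wfOm and N=wfS, OF w wy'(3) z])
  also have "teq_OS q \<dots> ([(c, \<omega>, y1)] @ [(c, \<omega>, y2)] @ [(c, \<omega>, y3)] @ [(c, \<omega>, y4)])"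
  proof -
    have "teq_OS q [(c, \<omega>, padd y3 y4)] ([(c, \<omega>, y3)] @ [(c, \<omega>, y4)])"
      using teq_addR[where M=wfOm and N=wfS, OF w(1) wy(3) wy(4)] by simp
    then have "teq_OS q [(c, \<omega>, padd y2 (padd y3 y4))] ([(c, \<omega>, y2)] @ [(c, \<omega>, y3)] @ [(c, \<omega>, y4)])"
      using teq_trans[OF teq_addR[where M=wfOm and N=wfS, OF w(1) wy(2) wy'(1)] teq_Cons[OF teq_refl]] by simp
    then show ?thesis
      using teq_trans[OF teq_addR[where M=wfOm and N=wfS, OF w(1) wy(1) wy'(2)] teq_Cons[OF teq_refl]] by simp
  qed
  also have "teq_OS q \<dots> ([(1, psc c (prmul \<omega> u1), (gd,[]))] @ [(- inverse Q, psc c (prmul \<omega> u2), (gb,[]))]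
     @ [(1, psc c (prmul \<omega> u3), ([],ga))] @ [(- Q, psc c (prmul \<omega> u4), ([],gc))])"
    unfolding y1_def y2_def y3_def y4_def
    by (intro teq_append teq_move_scalar w(1) hu wfS_frame)
  also have "\<dots> = shape q (coord_plus [(c,\<omega>,z)]) (coord_minus [(c,\<omega>,z)])"
    by (simp add: shape_def coord_plus_def coord_minus_def psc_def prmul_def Q_def u1_def u2_def
        u3_def u4_def fmul_fsc1 fmul_assoc)
  finally show ?thesis .
qed

lemma shape_zero: "teq_OS q (shape q ([],[]) ([],[])) []"
proof -
  have "wfOm ([],[])" by (simp add: wfOm_def)
  then have "teq_OS q ([(1, ([],[]), (gd,[]))] @ [(- inverse (of_real q), ([],[]), (gb,[]))]
      @ [(1, ([],[]), ([],ga))] @ [(- of_real q, ([],[]), ([],gc))]) ([] @ [] @ [] @ [])"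
    by (intro teq_append teq_zero_left wfS_frame)
  then show ?thesis by (simp add: shape_def prmul_def)
qed

lemma shape_append: assumes "wf_coord_plus a" "wf_coord_minus b" "wf_coord_plus a'" "wf_coord_minus b'"
  shows "teq_OS q (shape q a b @ shape q a' b') (shape q (padd a a') (padd b b'))"
proof -
  note w = shape_parts_wf[OF assms(1,2)] shape_parts_wf[OF assms(3,4)]
  let ?Q = "complex_of_real q"
  have "teq_OS q (shape q a b @ shape q a' b')
     ([(1, prmul a ga, (gd,[])), (1, prmul a' ga, (gd,[]))]
      @ [(- inverse ?Q, prmul a gc, (gb,[])), (- inverse ?Q, prmul a' gc, (gb,[]))]
      @ [(1, prmul b gd, ([],ga)), (1, prmul b' gd, ([],ga))]
      @ [(- ?Q, prmul b gb, ([],gc)), (- ?Q, prmul b' gb, ([],gc))])"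
    by (rule teq_tcoef) (simp add: shape_def fun_eq_iff algebra_simps)
  also have "teq_OS q \<dots> ([(1, padd (prmul a ga) (prmul a' ga), (gd,[]))]
      @ [(- inverse ?Q, padd (prmul a gc) (prmul a' gc), (gb,[]))]
      @ [(1, padd (prmul b gd) (prmul b' gd), ([],ga))]
      @ [(- ?Q, padd (prmul b gb) (prmul b' gb), ([],gc))])"
    using w by (intro teq_append teq_sym[OF teq_addL] wfS_frame) auto
  also have "\<dots> = shape q (padd a a') (padd b b')"
    by (simp add: shape_def padd_def prmul_def fadd_def)
  finally show ?thesis .
qed

lemma shape_tsc: assumes "wf_coord_plus a" "wf_coord_minus b"
  shows "teq_OS q (tsc k (shape q a b)) (shape q (psc k a) (psc k b))"
proof -
  note w = shape_parts_wf[OF assms]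
  let ?Q = "complex_of_real q"
  have "teq_OS q (shape q (psc k a) (psc k b))
      ([(1, psc k (prmul a ga), (gd,[]))] @ [(- inverse ?Q, psc k (prmul a gc), (gb,[]))]
      @ [(1, psc k (prmul b gd), ([],ga))] @ [(- ?Q, psc k (prmul b gb), ([],gc))])"
    by (simp add: shape_def prmul_psc)
  also have "teq_OS q \<dots> ([(1*k, prmul a ga, (gd,[]))] @ [(- inverse ?Q * k, prmul a gc, (gb,[]))]
      @ [(1*k, prmul b gd, ([],ga))] @ [(- ?Q * k, prmul b gb, ([],gc))])"
    using w by (intro teq_append teq_scL wfS_frame) auto
  also have "teq_OS q \<dots> (tsc k (shape q a b))"
    by (rule teq_tcoef) (simp add: shape_def fun_eq_iff algebra_simps)
  finally show ?thesis by (rule teq_sym)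
qed

lemma shape_cong:
  assumes "wf_coord_plus a" "wf_coord_minus b" "wf_coord_plus a'" "wf_coord_minus b'"
    and "peq q a a'" "peq q b b'"
  shows "teq_OS q (shape q a b) (shape q a' b')"
proof -
  note w = shape_parts_wf[OF assms(1,2)] shape_parts_wf[OF assms(3,4)]
  have p: "peq q (prmul a g) (prmul a' g)" "peq q (prmul b g) (prmul b' g)" for g
    using assms(5,6) by (auto simp: peq_iff_qcong intro: qcong_mult_right)
  have "teq_OS q ([(1, prmul a ga, (gd,[]))] @ [(- inverse (of_real q), prmul a gc, (gb,[]))]
      @ [(1, prmul b gd, ([],ga))] @ [(- of_real q, prmul b gb, ([],gc))])
     ([(1, prmul a' ga, (gd,[]))] @ [(- inverse (of_real q), prmul a' gc, (gb,[]))]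
      @ [(1, prmul b' gd, ([],ga))] @ [(- of_real q, prmul b' gb, ([],gc))])"
    using w by (intro teq_append teq_repL wfS_frame p) auto
  then show ?thesis by (simp add: shape_def)
qed

lemma teq_shape_coords: "twf wfOm wfS u \<Longrightarrow> teq_OS q u (shape q (coord_plus u) (coord_minus u))"
proof (induction u)
  case Nil then show ?case
    using teq_sym[OF shape_zero] by (simp add: coord_plus_def coord_minus_def)
next
  case (Cons x t) obtain c \<omega> z where x: "x = (c,\<omega>,z)" by (cases x) auto
  then have w: "wfOm \<omega>" "wfS z" "twf wfOm wfS t" using Cons.prems by auto
  have "teq_OS q (x#t) (shape q (coord_plus [x]) (coord_minus [x]) @ shape q (coord_plus t) (coord_minus t))"
    unfolding x by (rule teq_Cons[OF teq_single_shape[OF w(1,2)] Cons.IH[OF w(3)]])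
  also have "teq_OS q \<dots> (shape q (padd (coord_plus [x]) (coord_plus t)) (padd (coord_minus [x]) (coord_minus t)))"
    using w x by (intro shape_append wf_coords) auto
  also have "\<dots> = shape q (coord_plus (x#t)) (coord_minus (x#t))"
    by (simp only: coord_plus_Cons[symmetric] coord_minus_Cons[symmetric])
  finally show ?case .
qed

lemma teq_by_coords:
  assumes "twf wfOm wfS u" "twf wfOm wfS u'"
    and "peq q (coord_plus u) (coord_plus u')" "peq q (coord_minus u) (coord_minus u')"
  shows "teq_OS q u u'"
proof -
  have "teq_OS q (shape q (coord_plus u) (coord_minus u)) (shape q (coord_plus u') (coord_minus u'))"
    using assms by (intro shape_cong wf_coords)
  then show ?thesis
    using teq_trans[OF teq_shape_coords[OF assms(1)] teq_trans[OF _ teq_sym[OF teq_shape_coords[OF assms(2)]]]]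
    by blast
qed

lemma coords_sum:
  "Fst (coord_plus u) = (\<Sum>(c,\<omega>,z)\<leftarrow>u. cscale c (Fst \<omega> * Fst z))"
  "Snd (coord_plus u) = (\<Sum>(c,\<omega>,z)\<leftarrow>u. cscale c (Snd \<omega> * Fst z))"
  "Fst (coord_minus u) = (\<Sum>(c,\<omega>,z)\<leftarrow>u. cscale c (Fst \<omega> * Snd z))"
  "Snd (coord_minus u) = (\<Sum>(c,\<omega>,z)\<leftarrow>u. cscale c (Snd \<omega> * Snd z))"
  by (induction u) (auto simp: coord_plus_def coord_minus_def split_def)

lemma coords_shape:
  "Fst (coord_plus (shape q a b)) = Fst a * qdet_plus q" "Snd (coord_plus (shape q a b)) = Snd a * qdet_plus q"
  "Fst (coord_minus (shape q a b)) = Fst b * qdet_minus q" "Snd (coord_minus (shape q a b)) = Snd b * qdet_minus q"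
  by (simp_all add: shape_def coords_sum algebra_simps cscale_minus_scalar)

lemma coords_append:
  "Fst (coord_plus (u@u')) = Fst (coord_plus u) + Fst (coord_plus u')"
  "Snd (coord_plus (u@u')) = Snd (coord_plus u) + Snd (coord_plus u')"
  "Fst (coord_minus (u@u')) = Fst (coord_minus u) + Fst (coord_minus u')"
  "Snd (coord_minus (u@u')) = Snd (coord_minus u) + Snd (coord_minus u')"
  by (simp_all add: coords_sum)

lemma coords_tsc:
  "Fst (coord_plus (tsc k u)) = cscale k (Fst (coord_plus u))"
  "Snd (coord_plus (tsc k u)) = cscale k (Snd (coord_plus u))"
  "Fst (coord_minus (tsc k u)) = cscale k (Fst (coord_minus u))"
  "Snd (coord_minus (tsc k u)) = cscale k (Snd (coord_minus u))"
  by (induction u) (auto simp: coords_sum tsc_def)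

lemma coords_tlmul:
  "Fst (coord_plus (tlmul b u)) = abs_fralg b * Fst (coord_plus u)"
  "Snd (coord_plus (tlmul b u)) = abs_fralg b * Snd (coord_plus u)"
  "Fst (coord_minus (tlmul b u)) = abs_fralg b * Fst (coord_minus u)"
  "Snd (coord_minus (tlmul b u)) = abs_fralg b * Snd (coord_minus u)"
  by (induction u) (auto simp: tlmul_def coords_sum algebra_simps)

lemma coords_trmul:
  "Fst (coord_plus (trmul u b)) = Fst (coord_plus u) * abs_fralg b"
  "Snd (coord_plus (trmul u b)) = Snd (coord_plus u) * abs_fralg b"
  "Fst (coord_minus (trmul u b)) = Fst (coord_minus u) * abs_fralg b"
  "Snd (coord_minus (trmul u b)) = Snd (coord_minus u) * abs_fralg b"
  by (induction u) (auto simp: trmul_def coords_sum algebra_simps)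

section \<open>The connection \<open>\<nabla>\<^sub>\<S>\<close>\<close>

lemma homog_wder: assumes "\<And>g. homog (gdeg g + e) (dg g)"
  shows "homog (wdeg u + e) (wder dg q u)"
proof (induction u)
  case (Cons g w)
  have "homog (gdeg g + e + wdeg w) (fmul (dg g) [(1,w)])"
    by (rule homog_fmul[OF assms]) simp
  moreover have "homog (gdeg g + (wdeg w + e)) (fmul [(1,[g])] (wder dg q w))"
    by (rule homog_fmul[OF _ Cons]) (simp add: wdeg_def)
  ultimately show ?case by (simp add: fadd_def algebra_simps)
qed simp

lemma homog_dlin: assumes "\<And>g. homog (gdeg g + e) (dg g)" "homog n p"
  shows "homog (n + e) (dlin dg q p)"
  using assms(2)
proof (induction p)
  case (Cons a p) then show ?case
    using homog_wder[OF assms(1), of "snd a" q] by (cases a) (simp add: dlin_def)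
qed (simp add: dlin_def)

lemma homog_dplus: "homog n p \<Longrightarrow> homog (n - 2) (dplus q p)"
proof -
  have "homog (gdeg g + -2) (dplus_gen q g)" for g by (cases g) (auto simp: fsc_def fgen_def)
  then show "homog n p \<Longrightarrow> homog (n - 2) (dplus q p)"
    using homog_dlin[where dg="dplus_gen q" and e="-2" and q=q] by (simp add: dplus_def dlin_def)
qed

lemma homog_dminus: "homog n p \<Longrightarrow> homog (n + 2) (dminus q p)"
proof -
  have "homog (gdeg g + 2) (dminus_gen q g)" for g by (cases g) (auto simp: fgen_def)
  then show "homog n p \<Longrightarrow> homog (n + 2) (dminus q p)"
    using homog_dlin[where dg="dminus_gen q" and e=2 and q=q] by (simp add: dminus_def dlin_def)
qed

lemma wfOm_pd: "homog 0 b \<Longrightarrow> wfOm (pd q b)"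
  using homog_dplus[of 0 b q] homog_dminus[of 0 b q] by (simp add: wfOm_def)
lemma wf_coord_plus_pd: "homog (-1) x \<Longrightarrow> wf_coord_plus (psc k (pd q x))"
  using homog_dplus[of "-1" x q] homog_dminus[of "-1" x q] by (simp add: wf_coord_plus_def)
lemma wf_coord_minus_pd: "homog 1 y \<Longrightarrow> wf_coord_minus (psc k (pd q y))"
  using homog_dplus[of 1 y q] homog_dminus[of 1 y q] by (simp add: wf_coord_minus_def)
lemma wf_coord_plus_psc: "wf_coord_plus a \<Longrightarrow> wf_coord_plus (psc k a)"
  by (simp add: wf_coord_plus_def)
lemma wf_coord_minus_psc: "wf_coord_minus a \<Longrightarrow> wf_coord_minus (psc k a)"
  by (simp add: wf_coord_minus_def)

lemma twf_tlmul: "homog 0 b \<Longrightarrow> twf wfOm wfS u \<Longrightarrow> twf wfOm wfS (tlmul b u)"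
  by (induction u) (auto simp: tlmul_def wfOm_plmul)
lemma twf_trmul: "homog 0 b \<Longrightarrow> twf M wfS u \<Longrightarrow> twf M wfS (trmul u b)"
  by (induction u) (auto simp: trmul_def wfS_prmul)

lemma twf_nablaS: "wfS s \<Longrightarrow> twf wfOm wfS (nablaS q s)"
  unfolding nablaS_eq_shape by (rule twf_shape) (auto simp: wfS_def intro: wf_coord_plus_pd wf_coord_minus_pd)

lemma nablaS_cong: assumes "q \<noteq> 0" "wfS s" "wfS s'" "peq q s s'"
  shows "teq_OS q (nablaS q s) (nablaS q s')"
  unfolding nablaS_eq_shape using assms
  by (intro shape_cong wf_coord_plus_pd wf_coord_minus_pd)
     (auto simp: wfS_def peq_iff_qcong intro!: qcong_cscale qcong_Dplus qcong_Dminus)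

lemma nablaS_padd: assumes "wfS s" "wfS s'"
  shows "teq_OS q (nablaS q (padd s s')) (nablaS q s @ nablaS q s')"
proof -
  have "nablaS q (padd s s') = shape q
      (padd (psc (of_real q) (pd q (fst s))) (psc (of_real q) (pd q (fst s'))))
      (padd (psc (inverse (of_real q)) (pd q (snd s))) (psc (inverse (of_real q)) (pd q (snd s'))))"
    unfolding nablaS_eq_shape by (simp add: padd_def psc_def pd_def fadd_def dplus_def dminus_def)
  then show ?thesis
    unfolding nablaS_eq_shape using assms
    by (metis teq_sym shape_append wf_coord_plus_pd wf_coord_minus_pd wfS_def)
qed

lemma nablaS_psc: assumes "wfS s" shows "teq_OS q (nablaS q (psc k s)) (tsc k (nablaS q s))"
proof -
  let ?a = "psc (of_real q) (pd q (fst s))" and ?b = "psc (inverse (of_real q)) (pd q (snd s))"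
  have "teq_OS q (nablaS q (psc k s)) (shape q (psc k ?a) (psc k ?b))"
    unfolding nablaS_eq_shape using assms
    by (intro shape_cong wf_coord_plus_psc wf_coord_minus_psc wf_coord_plus_pd wf_coord_minus_pd peq_eqI)
       (auto simp: wfS_def mult.commute)
  moreover have "teq_OS q (tsc k (nablaS q s)) (shape q (psc k ?a) (psc k ?b))"
    unfolding nablaS_eq_shape using assms by (intro shape_tsc wf_coord_plus_pd wf_coord_minus_pd) (auto simp: wfS_def)
  ultimately show ?thesis using teq_sym teq_trans by metis
qed

lemma coords_single:
  "Fst (coord_plus [(c,\<omega>,z)]) = cscale c (Fst \<omega> * Fst z)" "Snd (coord_plus [(c,\<omega>,z)]) = cscale c (Snd \<omega> * Fst z)"
  "Fst (coord_minus [(c,\<omega>,z)]) = cscale c (Fst \<omega> * Snd z)" "Snd (coord_minus [(c,\<omega>,z)]) = cscale c (Snd \<omega> * Snd z)"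
  by (simp_all add: coords_sum)

text \<open>The degree of \<open>x\<close> in the Leibniz rule cancels the factor \<open>q\<^sup>\<pm>\<^sup>1\<close> built into \<open>\<nabla>\<^sub>\<S>\<close>.\<close>
lemma nablaS_left_leibniz: assumes q: "q \<noteq> 0" and b: "homog 0 b" and s: "wfS s"
  shows "teq_OS q (nablaS q (plmul b s)) ([(1, pd q b, s)] @ tlmul b (nablaS q s))"
proof -
  let ?Q = "complex_of_real q" and ?B = "abs_fralg b"
  have hs: "homogeneous (-1) (Fst s)" "homogeneous 1 (Snd s)"
    using s by (auto simp: wfS_def intro: homogeneous_abs)
  have tw: "twf wfOm wfS (nablaS q (plmul b s))" "twf wfOm wfS ([(1, pd q b, s)] @ tlmul b (nablaS q s))"
    using twf_nablaS[OF wfS_plmul[OF b s]] twf_nablaS[OF s] wfOm_pd[OF b] s twf_tlmul[OF b] by auto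
  have "Der dg q (?B * Fst s) = cscale (inverse ?Q) (Der dg q ?B * Fst s) + ?B * Der dg q (Fst s)"
    "Der dg q (?B * Snd s) = cscale ?Q (Der dg q ?B * Snd s) + ?B * Der dg q (Snd s)" for dg
    using Der_leibniz[OF q hs(1)] Der_leibniz[OF q hs(2)] by (simp_all add: power_int_minus)
  note leibniz = this[of "dplus_gen q"] this[of "dminus_gen q"]
  show ?thesis
  proof (rule teq_by_coords[OF tw])
    show "peq q (coord_plus (nablaS q (plmul b s))) (coord_plus ([(1, pd q b, s)] @ tlmul b (nablaS q s)))"
      unfolding peq_iff_qcong coords_append coords_tlmul coords_single nablaS_eq_shape coords_shape
      by (intro conjI qcong_common_rhs[OF qcong_qdet_right(1) qcong_add[OF qcong_refl qcong_mult_left[OF qcong_qdet_right(1)]]])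
         (simp_all add: leibniz q)
    show "peq q (coord_minus (nablaS q (plmul b s))) (coord_minus ([(1, pd q b, s)] @ tlmul b (nablaS q s)))"
      unfolding peq_iff_qcong coords_append coords_tlmul coords_single nablaS_eq_shape coords_shape
      by (intro conjI qcong_common_rhs[OF qcong_qdet_right(2) qcong_add[OF qcong_refl qcong_mult_left[OF qcong_qdet_right(2)]]])
         (simp_all add: leibniz q)
  qed
qed

section \<open>The generalised braiding \<open>\<sigma>\<^sub>\<S>\<close>\<close>

lemma sigmaS_Nil[simp]: "sigmaS q [] = []"
  by (simp add: sigmaS_def)
lemma sigmaS_Cons[simp]: "sigmaS q ((c,s,w)#t) = tsc c (sigmaS1 q s w) @ sigmaS q t"
  by (simp add: sigmaS_def)
lemma sigmaS_append[simp]: "sigmaS q (t@t') = sigmaS q t @ sigmaS q t'"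
  by (simp add: sigmaS_def)

lemma twf_tsc[simp]: "twf M N (tsc k u) \<longleftrightarrow> twf M N u"
  by (induction u) (auto simp: tsc_def)

lemma twf_sigmaS: "twf wfS wfOm t \<Longrightarrow> twf wfOm wfS (sigmaS q t)"
proof (induction t)
  case (Cons x t) obtain c s w where x: "x = (c,s,w)" by (cases x) auto
  then have "wfS s" "wfOm w" "twf wfS wfOm t" using Cons.prems by auto
  moreover from this have "homog (-1) (fst s)" "homog 1 (snd s)" "homog (-2) (fst w)" "homog 2 (snd w)"
    by (auto simp: wfS_def wfOm_def)
  ultimately have "homog (-1) (fst s)" "homog 1 (snd s)" "homog (-2) (fst w)" "homog 2 (snd w)"
    "twf wfOm wfS (sigmaS q t)"
    using Cons.IH by auto
  then show ?case
    using homog_fmul[of "-1" "fst s" "-2" "fst w"] homog_fmul[of "-1" "fst s" 2 "snd w"]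
      homog_fmul[of 1 "snd s" "-2" "fst w"] homog_fmul[of 1 "snd s" 2 "snd w"]
    unfolding x sigmaS_Cons sigmaS1_eq_shape twf_append twf_tsc
    by (auto intro!: twf_shape simp: wf_coord_plus_def wf_coord_minus_def)
qed simp

text \<open>\<open>tcontract\<close> descends to \<open>\<S> \<otimes>\<^sub>B \<Omega>\<^sup>1\<close> and determines the coordinates of \<open>\<sigma>\<^sub>\<S>\<close>.\<close>
definition tcontract :: "(pr \<Rightarrow> fa) \<Rightarrow> (pr \<Rightarrow> fa) \<Rightarrow> ten \<Rightarrow> fralg" where
  "tcontract s1 s2 t = (\<Sum>(c,m,n)\<leftarrow>t. cscale c (abs_fralg (s1 m) * abs_fralg (s2 n)))"

lemma tcontract_Nil[simp]: "tcontract s1 s2 [] = 0"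
  by (simp add: tcontract_def)
lemma tcontract_Cons[simp]:
  "tcontract s1 s2 ((c,m,n)#t) = cscale c (abs_fralg (s1 m) * abs_fralg (s2 n)) + tcontract s1 s2 t"
  by (simp add: tcontract_def)
lemma tcontract_append[simp]: "tcontract s1 s2 (t@t') = tcontract s1 s2 t + tcontract s1 s2 t'"
  by (simp add: tcontract_def)
lemma tcontract_tsc[simp]: "tcontract s1 s2 (tsc k t) = cscale k (tcontract s1 s2 t)"
  by (induction t) (auto simp: tcontract_def tsc_def)

lemma coords_sigmaS:
  "Fst (coord_plus (sigmaS q t)) = cscale (of_real q) (tcontract fst fst t * qdet_plus q)"
  "Snd (coord_plus (sigmaS q t)) = cscale (of_real q) (tcontract fst snd t * qdet_plus q)"
  "Fst (coord_minus (sigmaS q t)) = cscale (inverse (of_real q)) (tcontract snd fst t * qdet_minus q)"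
  "Snd (coord_minus (sigmaS q t)) = cscale (inverse (of_real q)) (tcontract snd snd t * qdet_minus q)"
  by (induction t) (auto simp: coords_append coords_tsc sigmaS1_eq_shape coords_shape algebra_simps)

lemma tcontract_tnull: assumes r: "r \<in> tnull q wfS wfOm"
  and sel: "s1 = fst \<or> s1 = snd" "s2 = fst \<or> s2 = snd"
  shows "tcontract s1 s2 r \<in> relideal q"
  using r
proof (induction rule: tnull.induct)
  case (tn_repL m m' n)
  have "qcong q (abs_fralg (s1 m) * abs_fralg (s2 n)) (abs_fralg (s1 m') * abs_fralg (s2 n))"
    using tn_repL(3) sel by (auto simp: peq_iff_qcong intro: qcong_mult_right)
  then show ?case by (simp add: qcong_def cscale_minus_scalar)
next
  case (tn_repR m n n')
  have "qcong q (abs_fralg (s1 m) * abs_fralg (s2 n)) (abs_fralg (s1 m) * abs_fralg (s2 n'))"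
    using tn_repR(4) sel by (auto simp: peq_iff_qcong intro: qcong_mult_left)
  then show ?case by (simp add: qcong_def cscale_minus_scalar)
qed (use sel in \<open>auto simp: relideal_add relideal_cscale padd_def fadd_def psc_def prmul_def plmul_def
      algebra_simps cscale_minus_scalar\<close>)

lemma tcontract_teq: assumes "teq q wfS wfOm t t'"
  and sel: "s1 = fst \<or> s1 = snd" "s2 = fst \<or> s2 = snd"
  shows "qcong q (tcontract s1 s2 t) (tcontract s1 s2 t')"
proof -
  obtain r where r: "r \<in> tnull q wfS wfOm" "tcoef (tsub t t') = tcoef r" using assms teq_def by auto
  have "tcontract s1 s2 (tsub t t') = tcontract s1 s2 r"
    unfolding tcontract_def split_def using r(2)
    by (intro sum_list_cong_lcoef[where F=cscale, unfolded split_def])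
       (auto simp: tcoef_eq_lcoef cscale_add_scalar)
  moreover have "tcontract s1 s2 (tsub t t') = tcontract s1 s2 t - tcontract s1 s2 t'"
    by (simp add: tsub_def cscale_minus_scalar)
  ultimately show ?thesis using tcontract_tnull[OF r(1) sel] by (simp add: qcong_def)
qed

lemma sigmaS_cong: assumes "twf wfS wfOm t" "twf wfS wfOm t'" "teq q wfS wfOm t t'"
  shows "teq_OS q (sigmaS q t) (sigmaS q t')"
  using assms
  by (intro teq_by_coords twf_sigmaS)
     (auto simp: peq_iff_qcong coords_sigmaS intro!: qcong_cscale qcong_mult_right tcontract_teq)

lemma sigmaS_tsc: "teq_OS q (sigmaS q (tsc k t)) (tsc k (sigmaS q t))"
proof -
  have "tcoef (sigmaS q (tsc k t)) = tcoef (tsc k (sigmaS q t))"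
    by (induction t) (auto simp: fun_eq_iff algebra_simps)
  then show ?thesis by (rule teq_tcoef)
qed

lemma tcontract_tlmul: "s1 = fst \<or> s1 = snd \<Longrightarrow> tcontract s1 s2 (tlmul b t) = abs_fralg b * tcontract s1 s2 t"
  by (induction t) (auto simp: tlmul_def algebra_simps)
lemma tcontract_trmul: "s2 = fst \<or> s2 = snd \<Longrightarrow> tcontract s1 s2 (trmul t b) = tcontract s1 s2 t * abs_fralg b"
  by (induction t) (auto simp: trmul_def algebra_simps)

lemma sigmaS_tlmul: assumes "homog 0 b" "twf wfS wfOm t"
  shows "teq_OS q (sigmaS q (tlmul b t)) (tlmul b (sigmaS q t))"
proof -
  have "twf wfS wfOm (tlmul b t)"
    using assms(2) by (induction t) (auto simp: tlmul_def wfS_plmul[OF assms(1)])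
  then show ?thesis
    using assms
    by (intro teq_by_coords twf_sigmaS twf_tlmul)
       (auto simp: peq_iff_qcong coords_sigmaS coords_tlmul tcontract_tlmul mult.assoc)
qed

text \<open>Right multiplication commutes with \<open>\<sigma>\<^sub>\<S>\<close> only modulo the relations: the quantum
  determinant is central up to the ideal because it is congruent to \<open>1\<close>.\<close>
lemma sigmaS_trmul: assumes "homog 0 b" "twf wfS wfOm t"
  shows "teq_OS q (sigmaS q (trmul t b)) (trmul (sigmaS q t) b)"
proof (rule teq_by_coords)
  have "twf wfS wfOm (trmul t b)"
    using assms(2) by (induction t) (auto simp: trmul_def wfOm_prmul[OF assms(1)])
  then show "twf wfOm wfS (sigmaS q (trmul t b))" "twf wfOm wfS (trmul (sigmaS q t) b)"
    using assms by (auto intro!: twf_sigmaS twf_trmul)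
  have "qcong q (G * B * qdet_plus q) (G * qdet_plus q * B)" "qcong q (G * B * qdet_minus q) (G * qdet_minus q * B)"
    for G B
    using qcong_common_rhs[OF qcong_qdet_right(1)[of q "G*B"] qcong_qdet(1)[of q G B]]
      qcong_common_rhs[OF qcong_qdet_right(2)[of q "G*B"] qcong_qdet(2)[of q G B]] by auto
  then show "peq q (coord_plus (sigmaS q (trmul t b))) (coord_plus (trmul (sigmaS q t) b))"
       "peq q (coord_minus (sigmaS q (trmul t b))) (coord_minus (trmul (sigmaS q t) b))"
    unfolding peq_iff_qcong coords_trmul coords_sigmaS
    by (auto simp: tcontract_trmul intro!: qcong_cscale)
qed

lemma nablaS_right_leibniz: assumes q: "q \<noteq> 0" and b: "homog 0 b" and s: "wfS s"
  shows "teq_OS q (nablaS q (prmul s b)) (trmul (nablaS q s) b @ sigmaS q [(1, s, pd q b)])"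
proof -
  let ?Q = "complex_of_real q" and ?B = "abs_fralg b"
  have hB: "homogeneous 0 ?B" using b by (rule homogeneous_abs)
  have tw: "twf wfOm wfS (nablaS q (prmul s b))"
    "twf wfOm wfS (trmul (nablaS q s) b @ sigmaS q [(1, s, pd q b)])"
    using twf_nablaS[OF wfS_prmul[OF b s]] twf_trmul[OF b twf_nablaS[OF s]]
      twf_sigmaS[of "[(1, s, pd q b)]" q] wfOm_pd[OF b] s by auto
  have leibniz: "Der dg q (x * ?B) = Der dg q x * ?B + x * Der dg q ?B" for dg x
    using Der_leibniz[OF q hB] by simp
  show ?thesis
  proof (rule teq_by_coords[OF tw])
    show "peq q (coord_plus (nablaS q (prmul s b))) (coord_plus (trmul (nablaS q s) b @ sigmaS q [(1, s, pd q b)]))"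
      unfolding peq_iff_qcong coords_append coords_trmul coords_sigmaS nablaS_eq_shape coords_shape
      by (intro conjI qcong_common_rhs[OF qcong_qdet_right(1) qcong_add[OF qcong_qdet(1) qcong_cscale[OF qcong_qdet_right(1)]]])
         (simp_all add: leibniz algebra_simps)
    show "peq q (coord_minus (nablaS q (prmul s b))) (coord_minus (trmul (nablaS q s) b @ sigmaS q [(1, s, pd q b)]))"
      unfolding peq_iff_qcong coords_append coords_trmul coords_sigmaS nablaS_eq_shape coords_shape
      by (intro conjI qcong_common_rhs[OF qcong_qdet_right(2) qcong_add[OF qcong_qdet(2) qcong_cscale[OF qcong_qdet_right(2)]]])
         (simp_all add: leibniz algebra_simps)
  qed
qed

lemma left_bimodule_connection_nablaS_sigmaS:
  assumes q: "q \<noteq> 0" shows "left_bimodule_connection_S q (nablaS q) (sigmaS q)"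
  unfolding left_bimodule_connection_S_def
  using twf_nablaS nablaS_cong[OF q] nablaS_padd nablaS_psc nablaS_left_leibniz[OF q]
    twf_sigmaS sigmaS_cong sigmaS_tsc sigmaS_tlmul sigmaS_trmul nablaS_right_leibniz[OF q]
  by simp

section \<open>The spectral triple conditions\<close>

lemma spinor_components[simp]:
  "Fst (JS q \<delta> s) = cscale (- of_real (inverse \<delta>)) (Star q (Snd s))"
  "Snd (JS q \<delta> s) = cscale (of_real \<delta>) (Star q (Fst s))"
  "Fst (JSinv q \<delta> s) = - cscale (- of_real (inverse \<delta>)) (Star q (Snd s))"
  "Snd (JSinv q \<delta> s) = - cscale (of_real \<delta>) (Star q (Fst s))"
  "Fst (gammaS s) = Fst s" "Snd (gammaS s) = - Snd s"
  "Fst (DiracS q \<alpha> \<beta> s) = cscale (\<alpha> * inverse (of_real q)) (Dplus q (Snd s))"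
  "Snd (DiracS q \<alpha> \<beta> s) = cscale (\<beta> * of_real q) (Dminus q (Fst s))"
  "Fst (plmul a s) = abs_fralg a * Fst s" "Snd (plmul a s) = abs_fralg a * Snd s"
  "Fst (pneg s) = - Fst s" "Snd (pneg s) = - Snd s"
  "Fst (psub s s') = Fst s - Fst s'" "Snd (psub s s') = Snd s - Snd s'"
  by (simp_all add: JS_def JSinv_def pneg_def gammaS_def DiracS_def psub_def cscale_minus_scalar)

lemma cliff_coords:
  "Fst (cliff \<alpha> \<beta> t) = cscale \<alpha> (Fst (coord_minus t))" "Snd (cliff \<alpha> \<beta> t) = cscale \<beta> (Snd (coord_plus t))"
  by (induction t) (auto simp: cliff_def cliff1_def coords_sum algebra_simps)

lemma cliff_nablaS: "peq q (cliff \<alpha> \<beta> (nablaS q s)) (DiracS q \<alpha> \<beta> s)"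
  unfolding peq_iff_qcong cliff_coords nablaS_eq_shape coords_shape
  by (auto simp: DiracS_def intro!: qcong_cscale qcong_qdet_right)

lemma JS_JSinv: assumes "q \<noteq> 0" "\<delta> \<noteq> 0"
  shows "peq q (JS q \<delta> (JSinv q \<delta> s)) s" "peq q (JSinv q \<delta> (JS q \<delta> s)) s"
  using assms by (auto intro!: peq_eqI simp: Star_Star cscale_minus_scalar)

lemma JS_JS: assumes "q \<noteq> 0" "\<delta> \<noteq> 0" shows "peq q (JS q \<delta> (JS q \<delta> s)) (pneg s)"
  using assms by (auto intro!: peq_eqI simp: Star_Star cscale_minus_scalar)

lemma JS_gammaS: "peq q (JS q \<delta> (gammaS s)) (pneg (gammaS (JS q \<delta> s)))"
  by (auto intro!: peq_eqI simp: cscale_minus_scalar)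

lemma gammaS_gammaS: "peq q (gammaS (gammaS s)) s"
  by (auto intro!: peq_eqI)

lemma gammaS_plmul: "peq q (gammaS (plmul a s)) (plmul a (gammaS s))"
  by (auto intro!: peq_eqI)

lemma DiracS_gammaS: "peq q (DiracS q \<alpha> \<beta> (gammaS s)) (pneg (gammaS (DiracS q \<alpha> \<beta> s)))"
  by (auto intro!: peq_eqI)

text \<open>\<open>\<J> b \<J>\<^sup>-\<^sup>1\<close> is right multiplication by \<open>b\<^sup>*\<close>, which commutes with left multiplication.\<close>
lemma plmul_JS_conj: assumes "q \<noteq> 0" "\<delta> \<noteq> 0"
  shows "peq q (plmul a (JS q \<delta> (plmul b (JSinv q \<delta> s)))) (JS q \<delta> (plmul b (JSinv q \<delta> (plmul a s))))"
  using assms by (auto intro!: peq_eqI simp: Star_Star Star_mult cscale_minus_scalar mult.assoc)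

lemma JS_DiracS: assumes q: "q \<noteq> 0" and d: "\<delta> \<noteq> 0"
  and H: "complex_of_real (\<delta>^2) * cnj \<alpha> = \<beta> * complex_of_real (q^2)" and s: "wfS s"
  shows "peq q (JS q \<delta> (DiracS q \<alpha> \<beta> s)) (DiracS q \<alpha> \<beta> (JS q \<delta> s))"
proof (rule peq_eqI)
  let ?Q = "complex_of_real q" and ?d = "complex_of_real \<delta>"
  have hs: "homogeneous (-1) (Fst s)" "homogeneous 1 (Snd s)"
    using s by (auto simp: wfS_def intro: homogeneous_abs)
  have "?d^2 * \<alpha> = cnj \<beta> * ?Q^2" using arg_cong[OF H, of cnj] by simp
  then have k1: "- inverse ?d * (cnj \<beta> * ?Q) = - (\<alpha> * inverse ?Q * ?d)"
    using q d by (simp add: field_simps power2_eq_square)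
  have k2: "?d * (cnj \<alpha> * inverse ?Q) = \<beta> * ?Q * inverse ?d"
    using H q d by (simp add: field_simps power2_eq_square)
  show "Fst (JS q \<delta> (DiracS q \<alpha> \<beta> s)) = Fst (DiracS q \<alpha> \<beta> (JS q \<delta> s))"
    using Star_Dminus[OF q hs(1)] k1 by (simp add: cscale_minus_scalar)
  show "Snd (JS q \<delta> (DiracS q \<alpha> \<beta> s)) = Snd (DiracS q \<alpha> \<beta> (JS q \<delta> s))"
    using Star_Dplus[OF q hs(2)] k2 by (simp add: cscale_minus_scalar)
qed

lemma first_order_condition:
  assumes q: "q \<noteq> 0" and d: "\<delta> \<noteq> 0" and a: "homog 0 a" and b: "homog 0 b" and s: "wfS s"
  shows "peq q (psub (DiracS q \<alpha> \<beta> (plmul a (JS q \<delta> (plmul b (JSinv q \<delta> s)))))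
                     (plmul a (DiracS q \<alpha> \<beta> (JS q \<delta> (plmul b (JSinv q \<delta> s))))))
               (JS q \<delta> (plmul b (JSinv q \<delta> (psub (DiracS q \<alpha> \<beta> (plmul a s)) (plmul a (DiracS q \<alpha> \<beta> s))))))"
proof -
  let ?Q = "complex_of_real q" and ?A = "abs_fralg a" and ?Bs = "Star q (abs_fralg b)"
  have hs: "homogeneous (-1) (Fst s)" "homogeneous 1 (Snd s)"
    using s by (auto simp: wfS_def intro: homogeneous_abs)
  have hB: "homogeneous 0 ?Bs" using homogeneous_Star[OF homogeneous_abs[OF b]] by simp
  have hsB: "homogeneous 1 (Snd s * ?Bs)" "homogeneous (-1) (Fst s * ?Bs)"
    using homogeneous_mult[OF hs(2) hB] homogeneous_mult[OF hs(1) hB] by simp_all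
  have "Dplus q (?A * (Snd s * ?Bs)) = cscale ?Q (Dplus q ?A * (Snd s * ?Bs)) + ?A * Dplus q (Snd s * ?Bs)"
    "Dminus q (?A * (Fst s * ?Bs)) = cscale (inverse ?Q) (Dminus q ?A * (Fst s * ?Bs)) + ?A * Dminus q (Fst s * ?Bs)"
    "Dplus q (?A * Snd s) = cscale ?Q (Dplus q ?A * Snd s) + ?A * Dplus q (Snd s)"
    "Dminus q (?A * Fst s) = cscale (inverse ?Q) (Dminus q ?A * Fst s) + ?A * Dminus q (Fst s)"
    using Der_leibniz[OF q hsB(1), of "dplus_gen q" ?A] Der_leibniz[OF q hsB(2), of "dminus_gen q" ?A]
      Der_leibniz[OF q hs(2), of "dplus_gen q" ?A] Der_leibniz[OF q hs(1), of "dminus_gen q" ?A]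
    by (simp_all add: power_int_minus)
  then show ?thesis
    using q d by (intro peq_eqI) (simp_all add: Star_mult Star_Star cscale_minus_scalar algebra_simps)
qed

theorem mainTheorem6:
  fixes q \<delta> :: real and \<alpha> \<beta> :: complex
  assumes "q \<noteq> 0" and "\<delta> \<noteq> 0"
    and "complex_of_real (\<delta>^2) * cnj \<alpha> = \<beta> * complex_of_real (q^2)"
  shows "left_bimodule_connection_S q (nablaS q) (sigmaS q)
    \<and> (\<forall>s. wfS s \<longrightarrow> peq q (cliff \<alpha> \<beta> (nablaS q s)) (DiracS q \<alpha> \<beta> s))
    \<and> (\<forall>s. wfS s \<longrightarrow> peq q (JS q \<delta> (JSinv q \<delta> s)) s \<and> peq q (JSinv q \<delta> (JS q \<delta> s)) s)
    \<and> (\<forall>s. wfS s \<longrightarrow> peq q (JS q \<delta> (JS q \<delta> s)) (pneg s))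
    \<and> (\<forall>s. wfS s \<longrightarrow> peq q (JS q \<delta> (gammaS s)) (pneg (gammaS (JS q \<delta> s))))
    \<and> (\<forall>s. wfS s \<longrightarrow> peq q (gammaS (gammaS s)) s)
    \<and> (\<forall>a s. homog 0 a \<longrightarrow> wfS s \<longrightarrow> peq q (gammaS (plmul a s)) (plmul a (gammaS s)))
    \<and> (\<forall>s. wfS s \<longrightarrow> peq q (DiracS q \<alpha> \<beta> (gammaS s)) (pneg (gammaS (DiracS q \<alpha> \<beta> s))))
    \<and> (\<forall>a b s. homog 0 a \<longrightarrow> homog 0 b \<longrightarrow> wfS s \<longrightarrow>
         peq q (plmul a (JS q \<delta> (plmul b (JSinv q \<delta> s))))
               (JS q \<delta> (plmul b (JSinv q \<delta> (plmul a s)))))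
    \<and> (\<forall>s. wfS s \<longrightarrow> peq q (JS q \<delta> (DiracS q \<alpha> \<beta> s)) (DiracS q \<alpha> \<beta> (JS q \<delta> s)))
    \<and> (\<forall>a b s. homog 0 a \<longrightarrow> homog 0 b \<longrightarrow> wfS s \<longrightarrow>
         (let Da = (\<lambda>u. psub (DiracS q \<alpha> \<beta> (plmul a u)) (plmul a (DiracS q \<alpha> \<beta> u)));
              Jb = (\<lambda>u. JS q \<delta> (plmul b (JSinv q \<delta> u)))
          in peq q (Da (Jb s)) (Jb (Da s))))"
  using left_bimodule_connection_nablaS_sigmaS[OF assms(1)] cliff_nablaS JS_JSinv[OF assms(1,2)]
    JS_JS[OF assms(1,2)] JS_gammaS gammaS_gammaS gammaS_plmul DiracS_gammaS plmul_JS_conj[OF assms(1,2)]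
    JS_DiracS[OF assms] first_order_condition[OF assms(1,2)]
  by (simp add: Let_def)

end
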